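(* Let $\mathcal{R}$ be a left-linear TRS, $M=(S,s_0,L,\delta,\mathit{out})$ the set automaton constructed from $\mathcal{R}$, $t_0$ a ground term and $\mathit{select}$ a strategy. In the execution of $\textsc{Normalize}(t_0,\mathit{select})$, the invariant $$t_0\to^* t\ \wedge\ ct\sqsubseteq\mathit{completed}(t)\ \wedge\ reds=\bigcup\{\mathit{matches}(s,p,t)\mid(s,p)\in\mathit{nodes}(ct)\}$$ holds immediately before the first iteration of the while loop, and whenever it holds before an iteration of the loop body it holds after that iteration.
   Context: Terms: $\mathbb{F}$ finite ranked alphabet with arity $\#$, $\mathbb{V}$ variables. Positions are finite lists of positive integers; $\epsilon$ empty, $p.q$ concatenation. $\mathcal{D}(t)$ positions of $t$, $\mathcal{E}(t)$ variable positions, $t|_p$ subterm, $t[u]_p$ replacement, $\mathrm{hd}(t)$ head symbol. A TRS $\mathcal{R}$ is a finite nonempty set of rules $\ell\to r$ ($\ell\notin\mathbb{V}$, $\mathrm{vars}(r)\subseteq\mathrm{vars}(\ell)$), with left-hand sides $\mathcal{L}$; left-linear means no variable occurs twice in any left-hand side. A redex of $t$ is $(\ell\to r)@p$ with $t|_p=\ell^\sigma$ for some $\sigma$; $t[(\ell\to r)@p]$ denotes $t[r^\sigma]_p$; $\to$ is one-step rewriting, $\to^*$ its reflexive-transitive closure. Set automaton construction. $\mathrm{sub}(\mathcal{L})$: subterms $\ell|_q$, $\ell\in\mathcal{L}$, $q\in\mathcal{D}(\ell)\setminus\mathcal{E}(\ell)$. A match goal $\ell_1@p_1,\dots,\ell_n@p_n\hookrightarrow\ell@p$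 ($n\ge1$) has nonempty obligation $mo=\{\ell_i@p_i\}$ ($\ell_i\in\mathrm{sub}(\mathcal{L})$) and announcement $\ell@p$ ($\ell\in\mathcal{L}$); $\mathrm{pos}(mo)=\{p_i\}$. States are nonempty sets of goals; $s_0=\{\ell@\epsilon\hookrightarrow\ell@\epsilon\mid\ell\in\mathcal{L}\}$; $S$ = states reachable from $s_0$. Each state $s$ has a fixed label $L(s)\in\mathrm{pos}(mo)$ for some goal $mo\hookrightarrow\ell@\epsilon\in s$. $\mathrm{reduce}(mo,f,p)=\{\ell'@q\in mo\mid q\ne p\}\cup\{\ell'|_i@p.i\mid\ell'@p\in mo,1\le i\le\#f,\ell'|_i\notin\mathbb{V}\}$. $\mathrm{deriv}(s,f)$ is the union of $\{\mathrm{reduce}(mo,f,L(s))\hookrightarrow ma\mid mo\hookrightarrow ma\in s,\exists\ell'.\ell'@L(s)\in mo\wedge\mathrm{hd}(\ell')=f,\mathrm{reduce}(mo,f,L(s))\ne\emptyset\}$, $\{mo\hookrightarrow ma\in s\mid L(s)\notin\mathrm{pos}(mo)\}$ and $\{\ell@L(s).i\hookrightarrow\ell@L(s).i\mid\ell\in\mathcal{L},1\le i\le\#f\}$. Goals are directly dependent if their obligation positions intersect; dependency is its transitive closure. For a dependency class $K$ of $\mathrm{deriv}(s,f)$, $\mathrm{gcp}(K)$ is the greatest common prefix of its announcement positions and $\mathrm{lift}(K)$ removes that prefix from all positions in $K$. $\delta(s,f)=\{(\mathrm{lift}(K),\mathrm{gcp}(K))\mid K\}$; $\mathit{out}(s,f)=\{(\ell\to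 r)@p\mid\ell\to r\in\mathcal{R},f(x_1,\dots,x_{\#f})@L(s)\hookrightarrow\ell@p\in s,x_i\in\mathbb{V}\}$. Configuration trees: $ct::=\mathit{bud}(s,p)\mid\mathit{node}(s,p,cts)$, $cts$ a finite possibly empty set of configuration trees; $\mathit{buds}(ct)$, $\mathit{nodes}(ct)$ are the configurations labelling bud/node vertices. For ground $t$: $\mathit{completed}(s,p,t)=\mathit{node}(s,p,\{\mathit{completed}(s',p.p',t)\mid(s',p')\in\delta(s,\mathrm{hd}(t|_{p.L(s)}))\})$, $\mathit{completed}(t)=\mathit{completed}(s_0,\epsilon,t)$. $\mathit{grow}(ct,s,p,t)$ replaces every $\mathit{bud}(s,p)$ in $ct$ by $\mathit{node}(s,p,\{\mathit{bud}(s',p.p')\mid(s',p')\in\delta(s,\mathrm{hd}(t|_{p.L(s)}))\})$ and leaves the rest unchanged. $\mathit{prune}(ct,q)$ replaces every subtree $\mathit{node}(s,p,cts)$ with $p.L(s)=q$ that is not inside another such replaced subtree by $\mathit{bud}(s,p)$ (formally: $\mathit{prune}(\mathit{bud}(s,p),q)=\mathit{bud}(s,p)$; $\mathit{prune}(\mathit{node}(s,p,cts),q)=\mathit{bud}(s,p)$ if $p.L(s)=q$, else $\mathit{node}(s,p,\{\mathit{prune}(c,q)\mid c\in cts\})$). $ct[p]$ is the subtree of $ct$ whose root configuration $(s,q)$ has $q.L(s)=p$. Fragment order $\sqsubseteq$: smallest relation with $\mathit{bud}(s,p)\sqsubseteq\mathit{bud}(s,p)$, $\mathit{bud}(s,p)\sqsubseteq\mathit{node}(s,p,cts)$,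 and $\mathit{node}(s,p,cts)\sqsubseteq\mathit{node}(s,p,cts')$ iff some bijection $\varphi:cts\to cts'$ has $c\sqsubseteq\varphi(c)$ for all $c$. $\mathit{matches}(s,p,t)=\{(\ell\to r)@p.q\mid(\ell\to r)@q\in\mathit{out}(s,\mathrm{hd}(t|_{p.L(s)}))\}$. Strategy: a partial function $\mathit{select}$ mapping $(ct,reds)$ with $\mathit{buds}(ct)\cup reds\neq\emptyset$ to an element of $\mathit{buds}(ct)\cup reds$. Procedure $\textsc{Normalize}(t_0,\mathit{select})$: set $t:=t_0$, $reds:=\emptyset$, $ct:=\mathit{bud}(s_0,\epsilon)$. While $\mathit{buds}(ct)\ne\emptyset$ or $reds\ne\emptyset$: let $a=\mathit{select}(ct,reds)$. If $a$ is a configuration $(s,p)$: $ct:=\mathit{grow}(ct,s,p,t)$, then $reds:=reds\cup\mathit{matches}(s,p,t)$. If $a$ is a redex $(\ell\to r)@p\in reds$: $reds:=reds\setminus\bigcup\{\mathit{matches}(s,q,t)\mid(s,q)\in\mathit{nodes}(ct[p])\}$, then $ct:=\mathit{prune}(ct,p)$, then $t:=t[(\ell\to r)@p]$. After the loop, return $t$. *)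

theory Defs
  imports Main "HOL-Library.FSet" "HOL-Library.Sublist"
begin

datatype ('f,'v) trm = is_Var: Var 'v | Fun 'f "('f,'v) trm list"

text \<open>Positions are lists of positive integers (argument indices start at 1).\<close>
type_synonym pos = "nat list"

fun valid_pos :: "('f,'v) trm \<Rightarrow> pos \<Rightarrow> bool" where
  "valid_pos t [] = True"
| "valid_pos (Var x) (i # p) = False"
| "valid_pos (Fun f ts) (i # p) = (1 \<le> i \<and> i \<le> length ts \<and> valid_pos (ts ! (i - 1)) p)"

definition poss :: "('f,'v) trm \<Rightarrow> pos set" where
  "poss t = {p. valid_pos t p}"

fun subt :: "('f,'v) trm \<Rightarrow> pos \<Rightarrow> ('f,'v) trm" where
  "subt t [] = t"
| "subt (Var x) (i # p) = Var x"
| "subt (Fun f ts) (i # p) = subt (ts ! (i - 1)) p"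

fun repl :: "('f,'v) trm \<Rightarrow> pos \<Rightarrow> ('f,'v) trm \<Rightarrow> ('f,'v) trm" where
  "repl t [] u = u"
| "repl (Var x) (i # p) u = Var x"
| "repl (Fun f ts) (i # p) u = Fun f (ts[i - 1 := repl (ts ! (i - 1)) p u])"

definition var_poss :: "('f,'v) trm \<Rightarrow> pos set" where
  "var_poss t = {p \<in> poss t. is_Var (subt t p)}"

definition vars :: "('f,'v) trm \<Rightarrow> 'v set" where
  "vars t = {x. \<exists>p \<in> poss t. subt t p = Var x}"

definition ground :: "('f,'v) trm \<Rightarrow> bool" where
  "ground t \<longleftrightarrow> vars t = {}"

fun head :: "('f,'v) trm \<Rightarrow> 'f" where
  "head (Fun f ts) = f"
| "head (Var x) = undefined"

fun subst :: "('v \<Rightarrow> ('f,'v) trm) \<Rightarrow> ('f,'v) trm \<Rightarrow> ('f,'v) trm" where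
  "subst \<sigma> (Var x) = \<sigma> x"
| "subst \<sigma> (Fun f ts) = Fun f (map (subst \<sigma>) ts)"

fun wf :: "('f \<Rightarrow> nat) \<Rightarrow> ('f,'v) trm \<Rightarrow> bool" where
  "wf ar (Var x) = True"
| "wf ar (Fun f ts) = (length ts = ar f \<and> (\<forall>u \<in> set ts. wf ar u))"

type_synonym ('f,'v) rule = "('f,'v) trm \<times> ('f,'v) trm"
type_synonym ('f,'v) redex = "('f,'v) rule \<times> pos"

definition trs :: "('f \<Rightarrow> nat) \<Rightarrow> ('f,'v) rule set \<Rightarrow> bool" where
  "trs ar R \<longleftrightarrow> finite R \<and> R \<noteq> {} \<and>
     (\<forall>(l, r) \<in> R. \<not> is_Var l \<and> vars r \<subseteq> vars l \<and> wf ar l \<and> wf ar r)"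

definition linear :: "('f,'v) trm \<Rightarrow> bool" where
  "linear t \<longleftrightarrow> (\<forall>p \<in> var_poss t. \<forall>q \<in> var_poss t. subt t p = subt t q \<longrightarrow> p = q)"

definition left_linear :: "('f,'v) rule set \<Rightarrow> bool" where
  "left_linear R \<longleftrightarrow> (\<forall>(l, r) \<in> R. linear l)"

definition lhss :: "('f,'v) rule set \<Rightarrow> ('f,'v) trm set" where
  "lhss R = fst ` R"

definition rstep :: "('f,'v) rule set \<Rightarrow> (('f,'v) trm \<times> ('f,'v) trm) set" where
  "rstep R = {(s, repl s p (subst \<sigma> r)) | s p \<sigma> l r.
                (l, r) \<in> R \<and> p \<in> poss s \<and> subt s p = subst \<sigma> l}"

definition apply_redex :: "('f,'v) trm \<Rightarrow> ('f,'v) redex \<Rightarrow> ('f,'v) trm" where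
  "apply_redex t red = (case red of ((l, r), p) \<Rightarrow>
      repl t p (subst (SOME \<sigma>. subt t p = subst \<sigma> l) r))"

text \<open>obligation: set of \<open>l@p\<close>; goal: obligation \<open>\<hookrightarrow>\<close> announcement; state: set of goals\<close>
type_synonym ('f,'v) obl = "(('f,'v) trm \<times> pos) set"
type_synonym ('f,'v) goal = "('f,'v) obl \<times> (('f,'v) trm \<times> pos)"
type_synonym ('f,'v) state = "('f,'v) goal set"

definition pos_of :: "('f,'v) obl \<Rightarrow> pos set" where
  "pos_of mo = snd ` mo"

definition s0 :: "('f,'v) trm set \<Rightarrow> ('f,'v) state" where
  "s0 L = {({(l, [])}, (l, [])) | l. l \<in> L}"

definition reduce :: "('f \<Rightarrow> nat) \<Rightarrow> ('f,'v) obl \<Rightarrow> 'f \<Rightarrow> pos \<Rightarrow> ('f,'v) obl" where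
  "reduce ar mo f p =
     {(l', q) \<in> mo. q \<noteq> p} \<union>
     {(subt l' [i], p @ [i]) | l' i. (l', p) \<in> mo \<and> 1 \<le> i \<and> i \<le> ar f \<and> \<not> is_Var (subt l' [i])}"

definition deriv :: "('f,'v) trm set \<Rightarrow> ('f \<Rightarrow> nat) \<Rightarrow> (('f,'v) state \<Rightarrow> pos)
                      \<Rightarrow> ('f,'v) state \<Rightarrow> 'f \<Rightarrow> ('f,'v) state" where
  "deriv L ar lab s f =
     {(reduce ar mo f (lab s), ma) | mo ma. (mo, ma) \<in> s \<and>
         (\<exists>l'. (l', lab s) \<in> mo \<and> \<not> is_Var l' \<and> head l' = f) \<and> reduce ar mo f (lab s) \<noteq> {}}
   \<union> {(mo, ma) \<in> s. lab s \<notin> pos_of mo}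
   \<union> {({(l, lab s @ [i])}, (l, lab s @ [i])) | l i. l \<in> L \<and> 1 \<le> i \<and> i \<le> ar f}"

definition dep :: "('f,'v) state \<Rightarrow> (('f,'v) goal \<times> ('f,'v) goal) set" where
  "dep D = {(g1, g2). g1 \<in> D \<and> g2 \<in> D \<and> pos_of (fst g1) \<inter> pos_of (fst g2) \<noteq> {}}"

definition dep_classes :: "('f,'v) state \<Rightarrow> ('f,'v) state set" where
  "dep_classes D = {(dep D)\<^sup>* `` {g} | g. g \<in> D}"

definition gcp :: "pos set \<Rightarrow> pos" where
  "gcp A = (THE q. (\<forall>p \<in> A. prefix q p) \<and> (\<forall>q'. (\<forall>p \<in> A. prefix q' p) \<longrightarrow> prefix q' q))"

definition gcp_goals :: "('f,'v) state \<Rightarrow> pos" where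
  "gcp_goals K = gcp ((\<lambda>g. snd (snd g)) ` K)"

definition lift :: "('f,'v) state \<Rightarrow> ('f,'v) state" where
  "lift K = (let n = length (gcp_goals K) in
     (\<lambda>(mo, (l, p)). ((\<lambda>(l', q). (l', drop n q)) ` mo, (l, drop n p))) ` K)"

definition delta :: "('f,'v) trm set \<Rightarrow> ('f \<Rightarrow> nat) \<Rightarrow> (('f,'v) state \<Rightarrow> pos)
                      \<Rightarrow> ('f,'v) state \<Rightarrow> 'f \<Rightarrow> (('f,'v) state \<times> pos) set" where
  "delta L ar lab s f = {(lift K, gcp_goals K) | K. K \<in> dep_classes (deriv L ar lab s f)}"

definition out :: "('f,'v) rule set \<Rightarrow> ('f \<Rightarrow> nat) \<Rightarrow> (('f,'v) state \<Rightarrow> pos)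
                    \<Rightarrow> ('f,'v) state \<Rightarrow> 'f \<Rightarrow> ('f,'v) redex set" where
  "out R ar lab s f = {((l, r), p) | l r p. (l, r) \<in> R \<and>
      (\<exists>xs. length xs = ar f \<and> ({(Fun f (map Var xs), lab s)}, (l, p)) \<in> s)}"

inductive_set reach :: "('f,'v) trm set \<Rightarrow> ('f \<Rightarrow> nat) \<Rightarrow> (('f,'v) state \<Rightarrow> pos)
                         \<Rightarrow> ('f,'v) state set"
  for L ar lab where
  "s0 L \<in> reach L ar lab"
| "s \<in> reach L ar lab \<Longrightarrow> (s', p') \<in> delta L ar lab s f \<Longrightarrow> s' \<in> reach L ar lab"

definition label_ok :: "('f,'v) trm set \<Rightarrow> ('f \<Rightarrow> nat) \<Rightarrow> (('f,'v) state \<Rightarrow> pos) \<Rightarrow> bool" where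
  "label_ok L ar lab \<longleftrightarrow>
     (\<forall>s \<in> reach L ar lab. \<exists>mo l. (mo, (l, [])) \<in> s \<and> lab s \<in> pos_of mo)"

datatype ('f,'v) ctree =
    Bud "('f,'v) state" pos
  | Node "('f,'v) state" pos "('f,'v) ctree fset"

primrec buds :: "('f,'v) ctree \<Rightarrow> (('f,'v) state \<times> pos) set" where
  "buds (Bud s p) = {(s, p)}"
| "buds (Node s p cts) = \<Union> (fset (fimage buds cts))"

primrec nodes :: "('f,'v) ctree \<Rightarrow> (('f,'v) state \<times> pos) set" where
  "nodes (Bud s p) = {}"
| "nodes (Node s p cts) = insert (s, p) (\<Union> (fset (fimage nodes cts)))"

primrec subtrees :: "('f,'v) ctree \<Rightarrow> ('f,'v) ctree set" where
  "subtrees (Bud s p) = {Bud s p}"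
| "subtrees (Node s p cts) = insert (Node s p cts) (\<Union> (fset (fimage subtrees cts)))"

fun root :: "('f,'v) ctree \<Rightarrow> ('f,'v) state \<times> pos" where
  "root (Bud s p) = (s, p)"
| "root (Node s p cts) = (s, p)"

text \<open>\<open>nodes(ct[p])\<close>: nodes of the subtree(s) whose root \<open>(s,q)\<close> satisfies \<open>q.L(s) = p\<close>\<close>
definition nodes_at :: "(('f,'v) state \<Rightarrow> pos) \<Rightarrow> ('f,'v) ctree \<Rightarrow> pos
                        \<Rightarrow> (('f,'v) state \<times> pos) set" where
  "nodes_at lab ct p = \<Union> {nodes c | c. c \<in> subtrees ct \<and>
                                 (case root c of (s, q) \<Rightarrow> q @ lab s = p)}"

definition children :: "('f,'v) trm set \<Rightarrow> ('f \<Rightarrow> nat) \<Rightarrow> (('f,'v) state \<Rightarrow> pos)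
                         \<Rightarrow> ('f,'v) state \<Rightarrow> pos \<Rightarrow> ('f,'v) trm \<Rightarrow> (('f,'v) state \<times> pos) set" where
  "children L ar lab s p t = delta L ar lab s (head (subt t (p @ lab s)))"

primrec grow :: "('f,'v) trm set \<Rightarrow> ('f \<Rightarrow> nat) \<Rightarrow> (('f,'v) state \<Rightarrow> pos)
                  \<Rightarrow> ('f,'v) ctree \<Rightarrow> ('f,'v) state \<Rightarrow> pos \<Rightarrow> ('f,'v) trm \<Rightarrow> ('f,'v) ctree" where
  "grow L ar lab (Bud s' p') s p t =
     (if (s', p') = (s, p)
      then Node s p (Abs_fset {Bud s'' (p @ q) | s'' q. (s'', q) \<in> children L ar lab s p t})
      else Bud s' p')"
| "grow L ar lab (Node s' p' cts) s p t =
     Node s' p' (fimage (\<lambda>c. grow L ar lab c s p t) cts)"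

primrec prune :: "(('f,'v) state \<Rightarrow> pos) \<Rightarrow> ('f,'v) ctree \<Rightarrow> pos \<Rightarrow> ('f,'v) ctree" where
  "prune lab (Bud s p) q = Bud s p"
| "prune lab (Node s p cts) q =
     (if p @ lab s = q then Bud s p else Node s p (fimage (\<lambda>c. prune lab c q) cts))"

inductive frag :: "('f,'v) ctree \<Rightarrow> ('f,'v) ctree \<Rightarrow> bool" where
  "frag (Bud s p) (Bud s p)"
| "frag (Bud s p) (Node s p cts)"
| "bij_betw \<phi> (fset cts) (fset cts') \<Longrightarrow> (\<forall>c \<in> fset cts. frag c (\<phi> c))
     \<Longrightarrow> frag (Node s p cts) (Node s p cts')"

text \<open>\<open>completed(s,p,t)\<close>, as the (inductively generated, finite) tree satisfying the
  recursive equation of the paper\<close>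
inductive compl :: "('f,'v) trm set \<Rightarrow> ('f \<Rightarrow> nat) \<Rightarrow> (('f,'v) state \<Rightarrow> pos) \<Rightarrow> ('f,'v) trm
                     \<Rightarrow> ('f,'v) state \<Rightarrow> pos \<Rightarrow> ('f,'v) ctree \<Rightarrow> bool"
  for L ar lab t where
  "(\<forall>(s', p') \<in> children L ar lab s p t. \<exists>c \<in> fset cts. compl L ar lab t s' (p @ p') c) \<Longrightarrow>
   (\<forall>c \<in> fset cts. \<exists>(s', p') \<in> children L ar lab s p t. compl L ar lab t s' (p @ p') c) \<Longrightarrow>
   compl L ar lab t s p (Node s p cts)"

definition completed :: "('f,'v) trm set \<Rightarrow> ('f \<Rightarrow> nat) \<Rightarrow> (('f,'v) state \<Rightarrow> pos)
                          \<Rightarrow> ('f,'v) trm \<Rightarrow> ('f,'v) ctree" where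
  "completed L ar lab t = (THE ct. compl L ar lab t (s0 L) [] ct)"

definition matches :: "('f,'v) rule set \<Rightarrow> ('f \<Rightarrow> nat) \<Rightarrow> (('f,'v) state \<Rightarrow> pos)
                        \<Rightarrow> ('f,'v) state \<Rightarrow> pos \<Rightarrow> ('f,'v) trm \<Rightarrow> ('f,'v) redex set" where
  "matches R ar lab s p t =
     {((l, r), p @ q) | l r q. ((l, r), q) \<in> out R ar lab s (head (subt t (p @ lab s)))}"

type_synonym ('f,'v) config = "('f,'v) state \<times> pos"
type_synonym ('f,'v) strategy = "('f,'v) ctree \<Rightarrow> ('f,'v) redex set \<Rightarrow> ('f,'v) config + ('f,'v) redex"

definition strategy :: "('f,'v) strategy \<Rightarrow> bool" where
  "strategy select \<longleftrightarrow> (\<forall>ct reds. buds ct \<noteq> {} \<or> reds \<noteq> {} \<longrightarrow>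
       select ct reds \<in> Inl ` buds ct \<union> Inr ` reds)"

definition loop_body :: "('f,'v) rule set \<Rightarrow> ('f \<Rightarrow> nat) \<Rightarrow> (('f,'v) state \<Rightarrow> pos) \<Rightarrow> ('f,'v) strategy
      \<Rightarrow> ('f,'v) trm \<times> ('f,'v) ctree \<times> ('f,'v) redex set
      \<Rightarrow> ('f,'v) trm \<times> ('f,'v) ctree \<times> ('f,'v) redex set" where
  "loop_body R ar lab select st = (case st of (t, ct, reds) \<Rightarrow>
     (case select ct reds of
        Inl (s, p) \<Rightarrow>
          (let ct' = grow (lhss R) ar lab ct s p t in (t, ct', reds \<union> matches R ar lab s p t))
      | Inr red \<Rightarrow>
          (let p = snd red;
               reds' = reds - \<Union> {matches R ar lab s q t | s q. (s, q) \<in> nodes_at lab ct p};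
               ct' = prune lab ct p;
               t' = apply_redex t red
           in (t', ct', reds'))))"

definition invariant :: "('f,'v) rule set \<Rightarrow> ('f \<Rightarrow> nat) \<Rightarrow> (('f,'v) state \<Rightarrow> pos) \<Rightarrow> ('f,'v) trm
      \<Rightarrow> ('f,'v) trm \<times> ('f,'v) ctree \<times> ('f,'v) redex set \<Rightarrow> bool" where
  "invariant R ar lab t0 st = (case st of (t, ct, reds) \<Rightarrow>
      (t0, t) \<in> (rstep R)\<^sup>* \<and>
      frag ct (completed (lhss R) ar lab t) \<and>
      reds = \<Union> {matches R ar lab s p t | s p. (s, p) \<in> nodes ct})"

end

theory Submission
  imports Defs
begin

text \<open>
  The completed tree of a term is determined locally: the children of a node depend only on the
  head symbol of the term at the node's label.  Read in absolute positions, every configuration of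
  the completed tree is consistent with the term relative to the set of labels of its ancestors:
  each goal announces a left-hand side whose non-variable positions either are still obligations,
  lying strictly below inspected positions, or have been inspected and agree with the term.  Hence
  distinct nodes have distinct labels, the children of a node govern disjoint sets of positions,
  and a redex is reported by at most one node; left-linearity makes every reported match an actual
  redex.  Rewriting at \<open>P\<close> changes
  no head symbol at the labels of the nodes outside the subtree labelled \<open>P\<close>, so pruning that
  subtree gives a fragment of the new completed tree, reporting the old redexes minus those of the
  pruned subtree.
\<close>

section \<open>Terms, positions and rewriting\<close>

lemma valid_pos_append:
  "valid_pos t (p @ q) \<longleftrightarrow> valid_pos t p \<and> valid_pos (subt t p) q"
  by (induction t p rule: valid_pos.induct) auto

lemma poss_append_iff: "p @ q \<in> poss t \<longleftrightarrow> p \<in> poss t \<and> q \<in> poss (subt t p)"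
  unfolding poss_def by (simp add: valid_pos_append)

lemma subt_Var [simp]: "subt (Var x) p = Var x"
  by (cases p) auto

lemma subt_append: "subt t (p @ q) = subt (subt t p) q"
  by (induction t p rule: subt.induct) auto

lemma Nil_in_poss [simp]: "[] \<in> poss t"
  unfolding poss_def by simp

lemma poss_Var [simp]: "poss (Var x) = {[]}"
  unfolding poss_def by (auto elim: valid_pos.elims)

lemma Cons_in_poss_Fun:
  "i # p \<in> poss (Fun f ts) \<longleftrightarrow> 1 \<le> i \<and> i \<le> length ts \<and> p \<in> poss (ts ! (i - 1))"
  unfolding poss_def by simp

lemma poss_Fun: "poss (Fun f ts) = insert [] (\<Union>i<length ts. (#) (Suc i) ` poss (ts ! i))"
proof -
  have "i # p \<in> poss (Fun f ts) \<longleftrightarrow> (\<exists>j<length ts. i = Suc j \<and> p \<in> poss (ts ! j))" for i p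
    by (cases i) (auto simp: Cons_in_poss_Fun)
  then show ?thesis
    by (intro set_eqI) (case_tac x; force)
qed

lemma finite_poss: "finite (poss t)"
  by (induction t) (auto simp: poss_Fun)

lemma vars_Var [simp]: "vars (Var x) = {x}"
  unfolding vars_def by simp

lemma vars_Fun: "vars (Fun f ts) = (\<Union>u \<in> set ts. vars u)"
proof -
  have "(\<exists>p \<in> poss (Fun f ts). subt (Fun f ts) p = Var x) \<longleftrightarrow>
        (\<exists>i<length ts. \<exists>p \<in> poss (ts ! i). subt (ts ! i) p = Var x)" for x
    by (auto simp: poss_Fun)
  then have "x \<in> vars (Fun f ts) \<longleftrightarrow> (\<exists>i<length ts. x \<in> vars (ts ! i))" for x
    unfolding vars_def by simp
  then show ?thesis
    by (auto simp: in_set_conv_nth) (metis nth_mem)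
qed

lemma ground_Fun: "ground (Fun f ts) \<longleftrightarrow> (\<forall>u \<in> set ts. ground u)"
  unfolding ground_def by (auto simp: vars_Fun)

lemma vars_subt: "p \<in> poss t \<Longrightarrow> vars (subt t p) \<subseteq> vars t"
  unfolding vars_def by (auto simp: poss_append_iff subt_append[symmetric])

lemma ground_subt: "ground t \<Longrightarrow> p \<in> poss t \<Longrightarrow> ground (subt t p)"
  using vars_subt unfolding ground_def by blast

lemma ground_subt_is_Fun: "ground t \<Longrightarrow> p \<in> poss t \<Longrightarrow> \<exists>f ts. subt t p = Fun f ts"
  using ground_subt[of t p] by (cases "subt t p") (auto simp: ground_def vars_def)

lemma wf_subt: "wf ar t \<Longrightarrow> p \<in> poss t \<Longrightarrow> wf ar (subt t p)"
  by (induction t p rule: subt.induct) (auto simp: Cons_in_poss_Fun)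

lemma vars_subst: "vars (subst \<sigma> t) = (\<Union>x \<in> vars t. vars (\<sigma> x))"
  by (induction t) (auto simp: vars_Fun)

lemma ground_subst: "ground (subst \<sigma> t) \<longleftrightarrow> (\<forall>x \<in> vars t. ground (\<sigma> x))"
  unfolding ground_def by (simp add: vars_subst)

lemma wf_subst: "wf ar (subst \<sigma> t) \<longleftrightarrow> wf ar t \<and> (\<forall>x \<in> vars t. wf ar (\<sigma> x))"
  by (induction t) (auto simp: vars_Fun)

lemma wf_repl: "p \<in> poss t \<Longrightarrow> wf ar t \<Longrightarrow> wf ar u \<Longrightarrow> wf ar (repl t p u)"
  by (induction t p u rule: repl.induct)
    (auto simp: Cons_in_poss_Fun dest!: set_update_subset_insert[THEN subsetD])

lemma ground_repl: "p \<in> poss t \<Longrightarrow> ground t \<Longrightarrow> ground u \<Longrightarrow> ground (repl t p u)"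
  by (induction t p u rule: repl.induct)
    (auto simp: Cons_in_poss_Fun ground_Fun dest!: set_update_subset_insert[THEN subsetD])

lemma rstep_preserves_wf_ground:
  assumes "trs ar R" and "(s, s') \<in> rstep R" and "wf ar s" and "ground s"
  shows "wf ar s' \<and> ground s'"
proof -
  obtain p \<sigma> l r where s': "s' = repl s p (subst \<sigma> r)" and lr: "(l, r) \<in> R"
    and p: "p \<in> poss s" and redex: "subt s p = subst \<sigma> l"
    using assms(2) unfolding rstep_def by auto
  have r: "vars r \<subseteq> vars l" "wf ar r"
    using assms(1) lr unfolding trs_def by auto
  have "wf ar (subst \<sigma> l)" "ground (subst \<sigma> l)"
    using redex wf_subt[OF assms(3) p] ground_subt[OF assms(4) p] by simp_all
  then have "wf ar (subst \<sigma> r)" "ground (subst \<sigma> r)"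
    using r by (auto simp: wf_subst ground_subst)
  then show ?thesis
    using s' p assms(3,4) by (simp add: wf_repl ground_repl)
qed

lemma rsteps_preserve_wf_ground:
  assumes "trs ar R" and "(s, s') \<in> (rstep R)\<^sup>*" and "wf ar s" and "ground s"
  shows "wf ar s' \<and> ground s'"
  using assms(2-4) by (induction rule: rtrancl_induct) (use assms(1) rstep_preserves_wf_ground in blast)+

lemma head_subt_repl:
  "X \<in> poss t \<Longrightarrow> P \<in> poss t \<Longrightarrow> \<not> prefix P X \<Longrightarrow> head (subt (repl t P u) X) = head (subt t X)"
proof (induction t X arbitrary: P rule: subt.induct)
  case (1 t)
  then show ?case
    by (cases t; cases P) auto
next
  case (2 x i X)
  then show ?case
    by simp
next
  case (3 f ts i X)
  then obtain j P' where P: "P = j # P'"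
    by (cases P) auto
  have ij: "1 \<le> i" "i \<le> length ts" "1 \<le> j" "j \<le> length ts"
    using 3(2,3) P by (simp_all add: Cons_in_poss_Fun)
  show ?case
  proof (cases "j = i")
    case True
    then show ?thesis
      using 3 P ij by (simp add: Cons_in_poss_Fun)
  next
    case False
    then have "j - 1 \<noteq> i - 1"
      using ij by simp
    then show ?thesis
      using P ij by simp
  qed
qed

text \<open>
  The matcher sends each variable to the subterm of \<open>t\<close> at its position in \<open>l\<close>, which is
  unique by linearity.
\<close>

lemma linear_matchI:
  assumes lin: "linear l" and "wf ar l" and "wf ar t" and "ground t"
    and agree: "\<And>u. u \<in> poss l \<Longrightarrow> \<not> is_Var (subt l u) \<Longrightarrow>
                  u \<in> poss t \<and> head (subt t u) = head (subt l u)"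
  shows "\<exists>\<sigma>. t = subst \<sigma> l"
proof -
  define \<sigma> where "\<sigma> x = subt t (SOME p. p \<in> poss l \<and> subt l p = Var x)" for x
  have "u \<in> poss l \<Longrightarrow> subt l u = l' \<Longrightarrow> subst \<sigma> l' = subt t u" for l' u
  proof (induction l' arbitrary: u)
    case (Var x)
    then have "(SOME p. p \<in> poss l \<and> subt l p = Var x) = u"
      using lin unfolding linear_def var_poss_def
      by (intro some_equality) auto
    then show ?case
      by (simp add: \<sigma>_def)
  next
    case (Fun f ls)
    then have u: "u \<in> poss t" "head (subt t u) = f"
      using agree by fastforce+
    then obtain ts where ts: "subt t u = Fun f ts"
      using ground_subt_is_Fun[OF \<open>ground t\<close>] by fastforce
    have "length ls = length ts"
      using wf_subt[OF \<open>wf ar l\<close> Fun.prems(1)] wf_subt[OF \<open>wf ar t\<close> u(1)] Fun.prems(2) ts by simp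
    moreover have "subst \<sigma> (ls ! i) = ts ! i" if "i < length ls" for i
    proof -
      have "u @ [Suc i] \<in> poss l" "subt l (u @ [Suc i]) = ls ! i"
        using Fun.prems that by (simp_all add: poss_append_iff Cons_in_poss_Fun subt_append)
      then show ?thesis
        using Fun.IH[of "ls ! i"] that ts by (simp add: subt_append)
    qed
    ultimately show ?case
      using ts by (simp add: list_eq_iff_nth_eq)
  qed
  then show ?thesis
    by (metis Nil_in_poss subt.simps(1))
qed

lemma apply_redex_rstep:
  assumes "(l, r) \<in> R" and "P \<in> poss t" and "\<exists>\<sigma>. subt t P = subst \<sigma> l"
  shows "(t, apply_redex t ((l, r), P)) \<in> rstep R" and "\<exists>u. apply_redex t ((l, r), P) = repl t P u"
proof -
  let ?\<sigma> = "SOME \<sigma>. subt t P = subst \<sigma> l"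
  have "subt t P = subst ?\<sigma> l"
    using someI_ex[OF assms(3)] .
  then show "(t, apply_redex t ((l, r), P)) \<in> rstep R"
    using assms(1,2) unfolding apply_redex_def rstep_def by auto
  show "\<exists>u. apply_redex t ((l, r), P) = repl t P u"
    unfolding apply_redex_def by auto
qed

section \<open>Absolute states\<close>

text \<open>
  The goals of a configuration \<open>(s, q)\<close> carry positions relative to \<open>q\<close>;
  \<open>shift_state q s\<close> is the same state in absolute positions of the term.
\<close>

definition shift_obl :: "pos \<Rightarrow> ('f,'v) obl \<Rightarrow> ('f,'v) obl" where
  "shift_obl q mo = (\<lambda>(l', Q). (l', q @ Q)) ` mo"

definition shift_goal :: "pos \<Rightarrow> ('f,'v) goal \<Rightarrow> ('f,'v) goal" where
  "shift_goal q g = (case g of (mo, (l, P)) \<Rightarrow> (shift_obl q mo, (l, q @ P)))"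

definition shift_state :: "pos \<Rightarrow> ('f,'v) state \<Rightarrow> ('f,'v) state" where
  "shift_state q s = shift_goal q ` s"

definition obl_poss :: "('f,'v) state \<Rightarrow> pos set" where
  "obl_poss A = (\<Union>g \<in> A. pos_of (fst g))"

lemma in_pos_of: "Q \<in> pos_of mo \<longleftrightarrow> (\<exists>l. (l, Q) \<in> mo)"
  unfolding pos_of_def by force

lemma pos_of_shift_obl: "pos_of (shift_obl q mo) = (@) q ` pos_of mo"
  unfolding pos_of_def shift_obl_def by force

lemma mem_shift_obl: "x \<in> shift_obl q mo \<longleftrightarrow> (\<exists>l' Q. x = (l', q @ Q) \<and> (l', Q) \<in> mo)"
  unfolding shift_obl_def by force

lemma append_mem_shift_obl [simp]: "(l', q @ Q) \<in> shift_obl q mo \<longleftrightarrow> (l', Q) \<in> mo"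
  unfolding mem_shift_obl by simp

lemma shift_obl_empty_iff [simp]: "shift_obl q mo = {} \<longleftrightarrow> mo = {}"
  unfolding shift_obl_def by simp

lemma shift_goal_Pair [simp]: "shift_goal q (mo, (l, P)) = (shift_obl q mo, (l, q @ P))"
  unfolding shift_goal_def by simp

lemma shift_state_Nil [simp]: "shift_state [] s = s"
  unfolding shift_state_def shift_goal_def shift_obl_def by (auto split: prod.splits)

lemma fst_shift_goal: "fst (shift_goal q g) = shift_obl q (fst g)"
  unfolding shift_goal_def by (simp split: prod.splits)

lemma obl_poss_shift_state: "obl_poss (shift_state q s) = (@) q ` obl_poss s"
  unfolding obl_poss_def shift_state_def by (simp add: image_UN fst_shift_goal pos_of_shift_obl)

lemma obl_poss_mono: "A \<subseteq> B \<Longrightarrow> obl_poss A \<subseteq> obl_poss B"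
  unfolding obl_poss_def by blast

lemma mem_reduce:
  "(l', Q) \<in> reduce ar mo f X \<longleftrightarrow> (l', Q) \<in> mo \<and> Q \<noteq> X \<or>
     (\<exists>l'' i. (l'', X) \<in> mo \<and> 1 \<le> i \<and> i \<le> ar f \<and> \<not> is_Var (subt l'' [i]) \<and>
        l' = subt l'' [i] \<and> Q = X @ [i])"
  unfolding reduce_def by blast

lemma shift_obl_reduce: "shift_obl q (reduce ar mo f X) = reduce ar (shift_obl q mo) f (q @ X)"
proof (rule set_eqI)
  fix x
  show "x \<in> shift_obl q (reduce ar mo f X) \<longleftrightarrow> x \<in> reduce ar (shift_obl q mo) f (q @ X)"
    by (cases x) (auto simp: mem_shift_obl mem_reduce)
qed

lemma pos_of_reduce_not_prefix:
  assumes X: "(Fun f ls, X) \<in> mo" and uX: "X = P @ uX" "subt l uX = Fun f ls"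
    and len: "length ls = ar f" and u: "u \<in> poss l" "\<not> is_Var (subt l u)" "u \<noteq> uX"
    and not_prefix: "\<forall>Q \<in> pos_of (reduce ar mo f X). \<not> prefix Q (P @ u)"
  shows "\<forall>Q \<in> pos_of mo. \<not> prefix Q (P @ u)"
proof (intro ballI notI)
  fix Q
  assume Q: "Q \<in> pos_of mo" and prefix: "prefix Q (P @ u)"
  show False
  proof (cases "Q = X")
    case False
    then have "Q \<in> pos_of (reduce ar mo f X)"
      using Q by (auto simp: in_pos_of mem_reduce)
    then show False
      using not_prefix prefix by blast
  next
    case True
    obtain w0 where "u = uX @ w0"
      using prefix uX(1) True by (auto simp: prefix_def)
    with u(3) obtain i w where u_eq: "u = uX @ i # w"
      by (cases w0) auto
    then have i: "1 \<le> i" "i \<le> ar f"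
      using u(1) uX(2) len by (auto simp: poss_append_iff Cons_in_poss_Fun)
    have "subt l u = subt (subt (Fun f ls) [i]) w"
      using u_eq uX(2) by (simp add: subt_append)
    then have "\<not> is_Var (subt (Fun f ls) [i])"
      using u(2) by (auto simp: is_Var_def)
    then have "X @ [i] \<in> pos_of (reduce ar mo f X)"
      using X i unfolding in_pos_of mem_reduce by blast
    moreover have "prefix (X @ [i]) (P @ u)"
      using u_eq uX(1) by simp
    ultimately show False
      using not_prefix by blast
  qed
qed

lemma deriv_reduceI:
  "(mo, ma) \<in> s \<Longrightarrow> (l', lab s) \<in> mo \<Longrightarrow> \<not> is_Var l' \<Longrightarrow> head l' = f \<Longrightarrow>
   reduce ar mo f (lab s) \<noteq> {} \<Longrightarrow> (reduce ar mo f (lab s), ma) \<in> deriv L ar lab s f"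
  unfolding deriv_def by blast

lemma deriv_keepI: "(mo, ma) \<in> s \<Longrightarrow> lab s \<notin> pos_of mo \<Longrightarrow> (mo, ma) \<in> deriv L ar lab s f"
  unfolding deriv_def by blast

lemma deriv_freshI:
  "l \<in> L \<Longrightarrow> 1 \<le> i \<Longrightarrow> i \<le> ar f \<Longrightarrow>
   ({(l, lab s @ [i])}, (l, lab s @ [i])) \<in> deriv L ar lab s f"
  unfolding deriv_def by blast

lemma deriv_cases:
  assumes "g \<in> deriv L ar lab s f"
  obtains (reduce) mo ma l' where "(mo, ma) \<in> s" "(l', lab s) \<in> mo" "\<not> is_Var l'" "head l' = f"
      "reduce ar mo f (lab s) \<noteq> {}" "g = (reduce ar mo f (lab s), ma)"
    | (keep) mo ma where "(mo, ma) \<in> s" "lab s \<notin> pos_of mo" "g = (mo, ma)"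
    | (fresh) l i where "l \<in> L" "1 \<le> i" "i \<le> ar f" "g = ({(l, lab s @ [i])}, (l, lab s @ [i]))"
  using assms unfolding deriv_def by blast

lemma shift_state_deriv:
  "shift_state q (deriv L ar lab s f) \<subseteq> deriv L ar (\<lambda>_. q @ lab s) (shift_state q s) f"
proof
  fix g'
  assume "g' \<in> shift_state q (deriv L ar lab s f)"
  then obtain g where g': "g' = shift_goal q g" and g: "g \<in> deriv L ar lab s f"
    unfolding shift_state_def by blast
  have shifted: "(shift_obl q mo, (l, q @ P)) \<in> shift_state q s" if "(mo, (l, P)) \<in> s" for mo l P
    using that unfolding shift_state_def by force
  from g show "g' \<in> deriv L ar (\<lambda>_. q @ lab s) (shift_state q s) f"
  proof (cases rule: deriv_cases)
    case (reduce mo ma l')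
    obtain l P where ma: "ma = (l, P)"
      by (cases ma)
    have "g' = (reduce ar (shift_obl q mo) f (q @ lab s), (l, q @ P))"
      using reduce(6) unfolding g' ma by (simp add: shift_obl_reduce)
    moreover have "(l', q @ lab s) \<in> shift_obl q mo" "reduce ar (shift_obl q mo) f (q @ lab s) \<noteq> {}"
      using reduce(2,5) by (simp_all flip: shift_obl_reduce)
    moreover note shifted[OF reduce(1)[unfolded ma]]
    ultimately show ?thesis
      using reduce(3,4) by (auto intro: deriv_reduceI[where lab="\<lambda>_. q @ lab s", simplified])
  next
    case (keep mo ma)
    obtain l P where ma: "ma = (l, P)"
      by (cases ma)
    from keep have "q @ lab s \<notin> pos_of (shift_obl q mo)"
      by (auto simp: pos_of_shift_obl)
    then show ?thesis
      using deriv_keepI[where lab="\<lambda>_. q @ lab s", OF shifted[OF keep(1)[unfolded ma]]]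
      unfolding g' keep(3) ma by simp
  next
    case (fresh l i)
    then have "g' = ({(l, (q @ lab s) @ [i])}, (l, (q @ lab s) @ [i]))"
      unfolding g' by (simp add: shift_obl_def)
    then show ?thesis
      using deriv_freshI[where lab="\<lambda>_. q @ lab s" and ar=ar and f=f, OF fresh(1-3)] by simp
  qed
qed

definition extensions :: "pos set \<Rightarrow> pos set" where
  "extensions Os = {Y. \<exists>Q \<in> Os. prefix Q Y}"

definition prefix_antichain :: "pos set \<Rightarrow> bool" where
  "prefix_antichain Os \<longleftrightarrow> (\<forall>a \<in> Os. \<forall>b \<in> Os. prefix a b \<longrightarrow> a = b)"

lemma extensions_mono: "Os \<subseteq> Os' \<Longrightarrow> extensions Os \<subseteq> extensions Os'"
  unfolding extensions_def by blast

lemma prefix_antichain_subset: "Os \<subseteq> Os' \<Longrightarrow> prefix_antichain Os' \<Longrightarrow> prefix_antichain Os"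
  unfolding prefix_antichain_def by blast

lemma prefix_antichain_expand:
  assumes ac: "prefix_antichain Os" and X: "X \<in> Os"
    and Os': "Os' \<subseteq> (Os - {X}) \<union> (\<lambda>i. X @ [i]) ` N"
  shows "prefix_antichain Os'"
  unfolding prefix_antichain_def
proof (intro ballI impI)
  fix a b
  assume a: "a \<in> Os'" and b: "b \<in> Os'" and ab: "prefix a b"
  have no_X_prefix: "\<not> prefix X c" "\<not> prefix c X" if "c \<in> Os - {X}" for c
    using that ac X unfolding prefix_antichain_def by blast+
  show "a = b"
  proof (cases "a \<in> Os - {X}")
    case True
    then show ?thesis
      using b ab Os' ac no_X_prefix(2)[OF True] unfolding prefix_antichain_def
      by (auto simp: prefix_snoc)
  next
    case False
    then obtain i where a_eq: "a = X @ [i]"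
      using a Os' by blast
    from b Os' consider "b \<in> Os - {X}" | j where "b = X @ [j]"
      by blast
    then show ?thesis
    proof cases
      case 1
      moreover have "prefix X b"
        using ab a_eq by (metis prefix_order.trans prefixI)
      ultimately show ?thesis
        using no_X_prefix(1) by blast
    qed (use ab a_eq in \<open>auto simp: prefix_snoc dest: prefix_length_le\<close>)
  qed
qed

lemma extensions_expand:
  assumes ac: "prefix_antichain Os" and X: "X \<in> Os"
    and Os': "Os' \<subseteq> (Os - {X}) \<union> (\<lambda>i. X @ [i]) ` N"
  shows "extensions Os' \<subseteq> extensions Os - {X}"
proof
  fix Y
  assume "Y \<in> extensions Os'"
  then obtain Q where Q: "Q \<in> Os'" "prefix Q Y"
    unfolding extensions_def by blast
  show "Y \<in> extensions Os - {X}"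
  proof (cases "Q \<in> Os - {X}")
    case True
    then have "Y \<noteq> X"
      using Q(2) ac X unfolding prefix_antichain_def by blast
    then show ?thesis
      using True Q unfolding extensions_def by blast
  next
    case False
    then obtain i where Q_eq: "Q = X @ [i]"
      using Q Os' by blast
    then have "prefix X Y"
      using Q(2) by (metis prefix_order.trans prefixI)
    moreover have "Y \<noteq> X"
      using Q(2) Q_eq by (auto dest: prefix_length_le)
    ultimately show ?thesis
      using X unfolding extensions_def by blast
  qed
qed

lemma extensions_disjoint:
  assumes "prefix_antichain Os" "O1 \<subseteq> Os" "O2 \<subseteq> Os" "O1 \<inter> O2 = {}"
  shows "extensions O1 \<inter> extensions O2 = {}"
  using assms prefix_same_cases unfolding extensions_def prefix_antichain_def by blast

lemma obl_poss_deriv: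
  "obl_poss (deriv L ar (\<lambda>_. X) A f) \<subseteq> (obl_poss A - {X}) \<union> (\<lambda>i. X @ [i]) ` {1..ar f}"
proof
  fix Q
  assume "Q \<in> obl_poss (deriv L ar (\<lambda>_. X) A f)"
  then obtain g where g: "g \<in> deriv L ar (\<lambda>_. X) A f" and Q: "Q \<in> pos_of (fst g)"
    unfolding obl_poss_def by blast
  have in_A: "Q \<in> obl_poss A" if "(mo, ma) \<in> A" "Q \<in> pos_of mo" for mo ma
    using that unfolding obl_poss_def by force
  from g show "Q \<in> (obl_poss A - {X}) \<union> (\<lambda>i. X @ [i]) ` {1..ar f}"
  proof (cases rule: deriv_cases)
    case (reduce mo ma l')
    then show ?thesis
      using Q in_A[OF reduce(1)] by (auto simp: in_pos_of mem_reduce)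
  next
    case (keep mo ma)
    then show ?thesis
      using Q in_A[OF keep(1)] by auto
  qed (use Q in \<open>auto simp: pos_of_def\<close>)
qed

lemma gcp_eq_Longest_common_prefix:
  assumes "A \<noteq> {}"
  shows "gcp A = Longest_common_prefix A"
  unfolding gcp_def
proof (rule the_equality)
  show "(\<forall>p \<in> A. prefix (Longest_common_prefix A) p) \<and>
      (\<forall>q'. (\<forall>p \<in> A. prefix q' p) \<longrightarrow> prefix q' (Longest_common_prefix A))"
    using assms by (simp add: Longest_common_prefix_prefix Longest_common_prefix_max_prefix)
next
  fix q
  assume "(\<forall>p \<in> A. prefix q p) \<and> (\<forall>q'. (\<forall>p \<in> A. prefix q' p) \<longrightarrow> prefix q' q)"
  then show "q = Longest_common_prefix A"
    using assms
    by (meson Longest_common_prefix_prefix Longest_common_prefix_max_prefix prefix_order.antisym)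
qed

lemma gcp_prefix: "p \<in> A \<Longrightarrow> prefix (gcp A) p"
  by (metis empty_iff gcp_eq_Longest_common_prefix Longest_common_prefix_prefix)

lemma prefix_append_drop: "prefix p q \<Longrightarrow> p @ drop (length p) q = q"
  by (auto simp: prefix_def)

lemma shift_state_lift:
  assumes "\<And>mo l P l' Q. (mo, (l, P)) \<in> K \<Longrightarrow> (l', Q) \<in> mo \<Longrightarrow> prefix P Q"
  shows "shift_state (q @ gcp_goals K) (lift K) = shift_state q K"
proof -
  let ?g = "gcp_goals K"
  let ?F = "\<lambda>(mo, (l, p)). ((\<lambda>(l', Q). (l', drop (length ?g) Q)) ` mo, (l, drop (length ?g) p))"
  have "shift_goal (q @ ?g) (?F x) = shift_goal q x" if x: "x \<in> K" for x
  proof -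
    obtain mo l P where x_eq: "x = (mo, (l, P))"
      by (cases x) auto
    have gP: "prefix ?g P"
      unfolding gcp_goals_def using x x_eq by (intro gcp_prefix) force
    then have "?g @ drop (length ?g) Q = Q" if "(l', Q) \<in> mo" for l' Q
      using assms x x_eq that prefix_order.trans by (metis prefix_append_drop)
    then have "shift_obl (q @ ?g) ((\<lambda>(l', Q). (l', drop (length ?g) Q)) ` mo) = shift_obl q mo"
      unfolding shift_obl_def image_image by (intro image_cong) auto
    then show ?thesis
      using prefix_append_drop[OF gP] unfolding x_eq by simp
  qed
  then show ?thesis
    unfolding shift_state_def lift_def Let_def image_image by (intro image_cong) auto
qed

lemma dep_classes_subset: "K \<in> dep_classes D \<Longrightarrow> K \<subseteq> D"
proof
  fix x
  assume "K \<in> dep_classes D" "x \<in> K"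
  then obtain g where "(g, x) \<in> (dep D)\<^sup>*" "g \<in> D"
    unfolding dep_classes_def by blast
  then show "x \<in> D"
    by (induction rule: rtrancl_induct) (auto simp: dep_def)
qed

lemma dep_classes_disjoint:
  assumes K1: "K1 \<in> dep_classes D" and K2: "K2 \<in> dep_classes D" and "K1 \<noteq> K2"
  shows "obl_poss K1 \<inter> obl_poss K2 = {}"
proof (rule ccontr)
  assume "obl_poss K1 \<inter> obl_poss K2 \<noteq> {}"
  then obtain g1 g2 where g: "g1 \<in> K1" "g2 \<in> K2" "pos_of (fst g1) \<inter> pos_of (fst g2) \<noteq> {}"
    unfolding obl_poss_def by blast
  then have "(g1, g2) \<in> dep D"
    using K1 K2 dep_classes_subset unfolding dep_def by blast
  moreover obtain h1 h2 where h: "K1 = (dep D)\<^sup>* `` {h1}" "K2 = (dep D)\<^sup>* `` {h2}"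
    using K1 K2 unfolding dep_classes_def by blast
  moreover have "sym ((dep D)\<^sup>*)"
    by (rule sym_rtrancl) (auto simp: sym_def dep_def)
  moreover have "(h1, g1) \<in> (dep D)\<^sup>*" "(h2, g2) \<in> (dep D)\<^sup>*"
    using g(1,2) h by auto
  ultimately have "(h1, h2) \<in> (dep D)\<^sup>*" "(h2, h1) \<in> (dep D)\<^sup>*"
    by (meson rtrancl.rtrancl_into_rtrancl rtrancl_trans symD)+
  then have "K1 = K2"
    unfolding h by (blast intro: rtrancl_trans)
  then show False
    using \<open>K1 \<noteq> K2\<close> by blast
qed

lemma finite_deriv: "finite s \<Longrightarrow> finite L \<Longrightarrow> finite (deriv L ar lab s f)"
proof -
  assume "finite s" "finite L"
  have "deriv L ar lab s f \<subseteq> (\<lambda>(mo, ma). (reduce ar mo f (lab s), ma)) ` s \<union> s \<union>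
      (\<lambda>(l, i). ({(l, lab s @ [i])}, (l, lab s @ [i]))) ` (L \<times> {1..ar f})"
    unfolding deriv_def by force
  moreover have "finite (L \<times> {1..ar f})"
    using \<open>finite L\<close> by simp
  ultimately show ?thesis
    using \<open>finite s\<close> by (meson finite_UnI finite_imageI finite_subset)
qed

lemma finite_dep_classes: "finite D \<Longrightarrow> finite (dep_classes D)"
  using dep_classes_subset by (metis Pow_iff finite_Pow_iff finite_subset subsetI)

lemma finite_delta: "finite s \<Longrightarrow> finite L \<Longrightarrow> finite (delta L ar lab s f)"
  unfolding delta_def
  using finite_dep_classes[OF finite_deriv, of s L ar lab f] by (simp add: setcompr_eq_image)

section \<open>Configuration trees\<close>

lemma compl_root: "compl L ar lab t s q D \<Longrightarrow> \<exists>cts. D = Node s q cts"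
  by (induction rule: compl.induct) auto

lemma compl_unique: "compl L ar lab t s q D1 \<Longrightarrow> compl L ar lab t s q D2 \<Longrightarrow> D1 = D2"
proof (induction arbitrary: D2 rule: compl.induct)
  case (1 s p cts)
  obtain cts2 where D2: "D2 = Node s p cts2"
    using compl_root[OF 1(3)] by blast
  have cts2: "\<forall>(s', p') \<in> children L ar lab s p t. \<exists>c \<in> fset cts2. compl L ar lab t s' (p @ p') c"
    "\<forall>c \<in> fset cts2. \<exists>(s', p') \<in> children L ar lab s p t. compl L ar lab t s' (p @ p') c"
    using 1(3) unfolding D2 by (auto elim: compl.cases)
  have "fset cts \<subseteq> fset cts2"
  proof
    fix c
    assume "c \<in> fset cts"
    then obtain s' p' where "(s', p') \<in> children L ar lab s p t"
      and "\<And>D. compl L ar lab t s' (p @ p') D \<Longrightarrow> c = D"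
      using 1(2) by blast
    then show "c \<in> fset cts2"
      using cts2(1) by blast
  qed
  moreover have "fset cts2 \<subseteq> fset cts"
  proof
    fix c2
    assume "c2 \<in> fset cts2"
    then obtain s' p' where "(s', p') \<in> children L ar lab s p t" "compl L ar lab t s' (p @ p') c2"
      using cts2(2) by blast
    then obtain c where "c \<in> fset cts" "\<And>D. compl L ar lab t s' (p @ p') D \<Longrightarrow> c = D"
      using 1(1) by blast
    then show "c2 \<in> fset cts"
      using \<open>compl L ar lab t s' (p @ p') c2\<close> by blast
  qed
  ultimately show ?case
    unfolding D2 by (simp add: fset_inject)
qed

lemma compl_Bud: "\<not> compl L ar lab t s q (Bud s' q')"
  by (subst compl.simps) simp

lemma compl_Node:
  "compl L ar lab t s q (Node s' q' cts) \<longleftrightarrow> s' = s \<and> q' = q \<and>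
     (\<forall>(s'', p'') \<in> children L ar lab s q t. \<exists>c \<in> fset cts. compl L ar lab t s'' (q @ p'') c) \<and>
     (\<forall>c \<in> fset cts. \<exists>(s'', p'') \<in> children L ar lab s q t. compl L ar lab t s'' (q @ p'') c)"
  by (subst compl.simps) auto

lemma compl_Node_child:
  assumes "compl L ar lab t s q (Node s' q' cts)" and "c \<in> fset cts"
  obtains s'' p'' where "(s'', p'') \<in> children L ar lab s q t" and "root c = (s'', q @ p'')"
    and "compl L ar lab t s'' (q @ p'') c"
proof -
  obtain s'' p'' where "(s'', p'') \<in> children L ar lab s q t" "compl L ar lab t s'' (q @ p'') c"
    using assms unfolding compl_Node by blast
  moreover have "root c = (s'', q @ p'')"
    using compl_root[OF calculation(2)] by auto
  ultimately show thesis
    using that by blast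
qed

lemma compl_Node_roots:
  assumes "compl L ar lab t s q (Node s' q' cts)"
  shows "root ` fset cts = (\<lambda>(s'', p''). (s'', q @ p'')) ` children L ar lab s q t"
proof
  show "root ` fset cts \<subseteq> (\<lambda>(s'', p''). (s'', q @ p'')) ` children L ar lab s q t"
    by (auto elim!: compl_Node_child[OF assms])
next
  show "(\<lambda>(s'', p''). (s'', q @ p'')) ` children L ar lab s q t \<subseteq> root ` fset cts"
  proof (clarify)
    fix s'' p''
    assume "(s'', p'') \<in> children L ar lab s q t"
    then obtain c where "c \<in> fset cts" "compl L ar lab t s'' (q @ p'') c"
      using assms unfolding compl_Node by blast
    then show "(s'', q @ p'') \<in> root ` fset cts"
      using compl_root by force
  qed
qed

lemma compl_Node_inj_root:
  assumes "compl L ar lab t s q (Node s' q' cts)"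
  shows "inj_on root (fset cts)"
proof (rule inj_onI)
  fix c1 c2
  assume c: "c1 \<in> fset cts" "c2 \<in> fset cts" "root c1 = root c2"
  obtain s1 p1 where "root c1 = (s1, q @ p1)" "compl L ar lab t s1 (q @ p1) c1"
    using compl_Node_child[OF assms c(1)] by metis
  moreover obtain s2 p2 where "root c2 = (s2, q @ p2)" "compl L ar lab t s2 (q @ p2) c2"
    using compl_Node_child[OF assms c(2)] by metis
  ultimately show "c1 = c2"
    using c(3) compl_unique by simp
qed

lemma compl_buds: "compl L ar lab t s q D \<Longrightarrow> buds D = {}"
  by (induction rule: compl.induct) fastforce

primrec inspected_nodes ::
  "(('f,'v) state \<Rightarrow> pos) \<Rightarrow> ('f,'v) ctree \<Rightarrow> pos set \<Rightarrow> (('f,'v) state \<times> pos \<times> pos set) set" where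
  "inspected_nodes lab (Bud s p) I = {}"
| "inspected_nodes lab (Node s p cts) I =
     insert (s, p, I) (\<Union> (fset (fimage (\<lambda>c. inspected_nodes lab c (insert (p @ lab s) I)) cts)))"

lemma nodes_inspected_nodes: "nodes c = (\<lambda>(s, p, J). (s, p)) ` inspected_nodes lab c I"
  by (induction c arbitrary: I) (auto simp: image_UN)

lemma inspected_nodes_supset: "(s, q, J) \<in> inspected_nodes lab c I \<Longrightarrow> I \<subseteq> J"
  by (induction c arbitrary: I) fastforce+

lemma inspected_nodes_ancestor:
  assumes "(s1, q1, I1) \<in> inspected_nodes lab c I" and "Y \<in> I1" and "Y \<notin> I"
  shows "\<exists>s2 q2 I2. (s2, q2, I2) \<in> inspected_nodes lab c I \<and> q2 @ lab s2 = Y \<and> Y \<notin> I2 \<and>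
           insert Y I2 \<subseteq> I1"
  using assms
proof (induction c arbitrary: I)
  case (Node s p cts)
  then obtain c where c: "c \<in> fset cts" "(s1, q1, I1) \<in> inspected_nodes lab c (insert (p @ lab s) I)"
    by auto
  show ?case
  proof (cases "Y = p @ lab s")
    case True
    have "(s, p, I) \<in> inspected_nodes lab (Node s p cts) I"
      by simp
    then show ?thesis
      using True Node.prems(3) inspected_nodes_supset[OF c(2)] by blast
  next
    case False
    then have "Y \<notin> insert (p @ lab s) I"
      using Node.prems(3) by simp
    then obtain s2 q2 I2 where "(s2, q2, I2) \<in> inspected_nodes lab c (insert (p @ lab s) I)"
      "q2 @ lab s2 = Y" "Y \<notin> I2" "insert Y I2 \<subseteq> I1"
      using Node.IH[OF c Node.prems(2)] by blast
    moreover have "inspected_nodes lab c (insert (p @ lab s) I) \<subseteq> inspected_nodes lab (Node s p cts) I"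
      using c(1) by auto
    ultimately show ?thesis
      by blast
  qed
qed simp

lemma frag_root: "frag c D \<Longrightarrow> root c = root D"
  by (induction rule: frag.induct) auto

lemma frag_Node_Node_iff:
  assumes inj_B: "inj_on root (fset B)"
  shows "frag (Node s p A) (Node s' p' B) \<longleftrightarrow> s = s' \<and> p = p' \<and> inj_on root (fset A) \<and>
           root ` fset A = root ` fset B \<and> (\<forall>a \<in> fset A. \<forall>b \<in> fset B. root a = root b \<longrightarrow> frag a b)"
proof
  assume "frag (Node s p A) (Node s' p' B)"
  then obtain \<phi> where same: "s = s'" "p = p'" and \<phi>: "bij_betw \<phi> (fset A) (fset B)"
    and frag: "\<forall>a \<in> fset A. frag a (\<phi> a)"
    by (cases rule: frag.cases) auto
  have root_\<phi>: "root (\<phi> a) = root a" if "a \<in> fset A" for a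
    using frag that frag_root by metis
  have "inj_on root (fset A)"
    using inj_B bij_betw_imp_inj_on[OF \<phi>] bij_betwE[OF \<phi>] root_\<phi>
    unfolding inj_on_def by metis
  moreover have "root ` fset A = root ` fset B"
    using bij_betw_imp_surj_on[OF \<phi>] root_\<phi> by (metis image_cong image_image)
  moreover have "frag a b" if "a \<in> fset A" "b \<in> fset B" "root a = root b" for a b
    using that inj_B bij_betwE[OF \<phi>] root_\<phi> frag unfolding inj_on_def by metis
  ultimately show "s = s' \<and> p = p' \<and> inj_on root (fset A) \<and> root ` fset A = root ` fset B \<and>
      (\<forall>a \<in> fset A. \<forall>b \<in> fset B. root a = root b \<longrightarrow> frag a b)"
    using same by blast
next
  assume "s = s' \<and> p = p' \<and> inj_on root (fset A) \<and> root ` fset A = root ` fset B \<and>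
      (\<forall>a \<in> fset A. \<forall>b \<in> fset B. root a = root b \<longrightarrow> frag a b)"
  then have same: "s = s'" "p = p'" and inj_A: "inj_on root (fset A)"
    and roots: "root ` fset A = root ` fset B"
    and frag: "\<forall>a \<in> fset A. \<forall>b \<in> fset B. root a = root b \<longrightarrow> frag a b"
    by blast+
  define \<phi> where "\<phi> = inv_into (fset B) root \<circ> root"
  have "bij_betw root (fset A) (root ` fset B)" "bij_betw (inv_into (fset B) root) (root ` fset B) (fset B)"
    using inj_A inj_B roots by (simp_all add: bij_betw_imageI bij_betw_inv_into)
  then have "bij_betw \<phi> (fset A) (fset B)"
    unfolding \<phi>_def by (rule bij_betw_trans)
  moreover have "frag a (\<phi> a)" if "a \<in> fset A" for a
  proof -
    have "root a \<in> root ` fset B"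
      using roots that by blast
    then have "\<phi> a \<in> fset B" "root (\<phi> a) = root a"
      unfolding \<phi>_def by (simp_all add: inv_into_into f_inv_into_f)
    then show ?thesis
      using frag that by metis
  qed
  ultimately show "frag (Node s p A) (Node s' p' B)"
    unfolding same by (blast intro: frag.intros(3))
qed

lemma frag_Node_fimage:
  assumes frag: "frag (Node s p A) (Node s p B)" and inj_B: "inj_on root (fset B)"
    and inj_C: "inj_on root (fset C)" and roots: "root ` fset B = root ` fset C"
    and root_F: "\<And>a. root (F a) = root a"
    and frag_F: "\<And>a b c. a \<in> fset A \<Longrightarrow> b \<in> fset B \<Longrightarrow> c \<in> fset C \<Longrightarrow> frag a b \<Longrightarrow>
                   root b = root c \<Longrightarrow> frag (F a) c"
  shows "frag (Node s p (fimage F A)) (Node s p C)"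
proof -
  have inj_A: "inj_on root (fset A)" and roots_A: "root ` fset A = root ` fset B"
    and frag_A: "\<forall>a \<in> fset A. \<forall>b \<in> fset B. root a = root b \<longrightarrow> frag a b"
    using frag unfolding frag_Node_Node_iff[OF inj_B] by blast+
  have root_image: "root ` F ` fset A = root ` fset A"
    using root_F by (simp add: image_image)
  have "inj_on root (F ` fset A)"
  proof (rule inj_onI)
    fix x y
    assume "x \<in> F ` fset A" "y \<in> F ` fset A" "root x = root y"
    then obtain a1 a2 where "a1 \<in> fset A" "a2 \<in> fset A" "x = F a1" "y = F a2" "root a1 = root a2"
      using root_F by auto
    then show "x = y"
      using inj_A by (simp add: inj_on_eq_iff)
  qed
  moreover have "frag (F a) c" if a: "a \<in> fset A" and c: "c \<in> fset C" and "root (F a) = root c" for a c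
  proof -
    obtain b where b: "b \<in> fset B" "root b = root a"
      using roots_A a by (metis imageE imageI)
    then have "frag a b" "root b = root c"
      using frag_A a \<open>root (F a) = root c\<close> root_F by auto
    then show ?thesis
      using frag_F[OF a b(1) c] by blast
  qed
  ultimately show ?thesis
    using roots roots_A root_image by (simp add: frag_Node_Node_iff[OF inj_C])
qed

lemma frag_inspected_nodes: "frag c D \<Longrightarrow> inspected_nodes lab c I \<subseteq> inspected_nodes lab D I"
proof (induction arbitrary: I rule: frag.induct)
  case (3 \<phi> cts cts' s p)
  then show ?case
    using bij_betwE[OF 3(1)] by fastforce
qed auto

lemma frag_buds: "frag c D \<Longrightarrow> buds c \<subseteq> nodes D \<union> buds D"
proof (induction rule: frag.induct)
  case (3 \<phi> cts cts' s p)
  then show ?case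
    using bij_betwE[OF 3(1)] by fastforce
qed auto

lemma root_grow: "root (grow L ar lab c s p t) = root c"
  by (cases c) auto

lemma nodes_grow:
  assumes "finite (children L ar lab s p t)"
  shows "nodes (grow L ar lab c s p t) = (if (s, p) \<in> buds c then insert (s, p) (nodes c) else nodes c)"
proof (induction c)
  case (Bud s' p')
  have "{Bud s'' (p @ q) | s'' q. (s'', q) \<in> children L ar lab s p t} =
      (\<lambda>(s'', q). Bud s'' (p @ q)) ` children L ar lab s p t"
    by auto
  then have "fset (Abs_fset {Bud s'' (p @ q) | s'' q. (s'', q) \<in> children L ar lab s p t}) =
      {Bud s'' (p @ q) | s'' q. (s'', q) \<in> children L ar lab s p t}"
    using assms by (simp add: Abs_fset_inverse)
  then show ?case
    by auto
qed auto

lemma frag_Node_buds: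
  assumes compl: "compl L ar lab t s p (Node s p cts)"
  shows "frag (Node s p (Abs_fset {Bud s'' (p @ q) | s'' q. (s'', q) \<in> children L ar lab s p t}))
           (Node s p cts)"
proof -
  let ?ch = "children L ar lab s p t"
  let ?B = "{Bud s'' (p @ q) | s'' q. (s'', q) \<in> ?ch}"
  have roots: "root ` fset cts = (\<lambda>(s'', q). (s'', p @ q)) ` ?ch"
    using compl_Node_roots[OF compl] .
  have "inj_on (\<lambda>(s'', q). (s'', p @ q)) ?ch"
    by (auto simp: inj_on_def)
  then have "finite ?ch"
    using roots finite_image_iff by (metis finite_fset finite_imageI)
  moreover have B: "?B = (\<lambda>(s'', q). Bud s'' (p @ q)) ` ?ch"
    by auto
  ultimately have fset_B: "fset (Abs_fset ?B) = ?B"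
    by (simp add: Abs_fset_inverse)
  have "frag b' b" if b': "b' \<in> ?B" and b: "b \<in> fset cts" and "root b' = root b" for b' b
  proof -
    obtain s'' q'' where b'_eq: "b' = Bud s'' q''"
      using b' by blast
    obtain s1 q1 where "compl L ar lab t s1 q1 b"
      using compl_Node_child[OF compl b] by metis
    then obtain cs where "b = Node s1 q1 cs"
      using compl_root by blast
    then show ?thesis
      using b'_eq \<open>root b' = root b\<close> by (simp add: frag.intros(2))
  qed
  moreover have "inj_on root ?B"
    by (auto simp: inj_on_def)
  moreover have "root ` ?B = root ` fset cts"
    unfolding roots B image_image by (intro image_cong) auto
  ultimately show ?thesis
    using compl_Node_inj_root[OF compl] fset_B by (simp add: frag_Node_Node_iff)
qed

lemma frag_grow: "frag c D \<Longrightarrow> compl L ar lab t s' q' D \<Longrightarrow> frag (grow L ar lab c s p t) D"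
proof (induction c arbitrary: s' q' D)
  case (Bud s0 p0)
  obtain cts where D: "D = Node s' q' cts"
    using compl_root[OF Bud(2)] by blast
  then have "s0 = s'" "p0 = q'"
    using Bud(1) by (auto elim: frag.cases)
  then show ?case
    using Bud frag_Node_buds[of L ar lab t s p cts] unfolding D by (auto simp del: prod.inject)
next
  case (Node s0 p0 cts0)
  obtain cts where D: "D = Node s' q' cts"
    using compl_root[OF Node(3)] by blast
  then have root: "s0 = s'" "p0 = q'"
    using Node(2) frag_root by fastforce+
  have inj: "inj_on root (fset cts)"
    using compl_Node_inj_root Node(3) D by blast
  have "frag (grow L ar lab a s p t) c" if a: "a \<in> fset cts0" and b: "b \<in> fset cts"
    and c: "c \<in> fset cts" and frag: "frag a b" and "root b = root c" for a b c
  proof -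
    have "b = c"
      using inj b c \<open>root b = root c\<close> by (simp add: inj_on_eq_iff)
    moreover obtain s'' q'' where "compl L ar lab t s'' q'' b"
      using compl_Node_child[OF Node(3)[unfolded D] b] by metis
    ultimately show ?thesis
      using Node.IH[OF a frag] by blast
  qed
  then have "frag (Node s' q' (fimage (\<lambda>c. grow L ar lab c s p t) cts0)) (Node s' q' cts)"
    using Node(2) inj unfolding D root by (intro frag_Node_fimage) (simp_all add: root_grow)
  then show ?case
    unfolding D root by simp
qed

lemma root_prune: "root (prune lab c P) = root c"
  by (cases c) auto

lemma inspected_nodes_prune: "inspected_nodes lab (prune lab c P) I \<subseteq> inspected_nodes lab c I"
  by (induction c arbitrary: I) auto

lemma inspected_nodes_prune_label:
  "P \<notin> I \<Longrightarrow> (s, q, J) \<in> inspected_nodes lab (prune lab c P) I \<Longrightarrow> q @ lab s \<noteq> P \<and> P \<notin> J"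
proof (induction c arbitrary: I)
  case (Node s0 p cts)
  show ?case
  proof (cases "p @ lab s0 = P")
    case False
    then have P: "P \<notin> insert (p @ lab s0) I"
      using Node.prems(1) by simp
    from Node.prems(2) False consider "(s, q, J) = (s0, p, I)"
      | c where "c \<in> fset cts" "(s, q, J) \<in> inspected_nodes lab (prune lab c P) (insert (p @ lab s0) I)"
      by auto
    then show ?thesis
    proof cases
      case 2
      show ?thesis
        using Node.IH[OF 2(1) P 2(2)] .
    qed (use False Node.prems(1) in simp)
  qed (use Node.prems in simp)
qed simp

lemma pruned_node_inspected:
  assumes "frag ct D" and "(s, q) \<in> nodes (prune lab ct P)"
  shows "\<exists>J. (s, q, J) \<in> inspected_nodes lab D {} \<and> q @ lab s \<noteq> P \<and> P \<notin> J"
proof -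
  obtain J where J: "(s, q, J) \<in> inspected_nodes lab (prune lab ct P) {}"
    using assms(2) nodes_inspected_nodes[of "prune lab ct P" lab "{}"] by auto
  then show ?thesis
    using inspected_nodes_prune_label[of P "{}"] inspected_nodes_prune frag_inspected_nodes[OF assms(1)]
    by blast
qed

lemma inspected_nodes_subtrees:
  "c' \<in> subtrees c \<Longrightarrow> \<exists>J. I \<subseteq> J \<and> inspected_nodes lab c' J \<subseteq> inspected_nodes lab c I"
proof (induction c arbitrary: I)
  case (Node s p cts)
  show ?case
  proof (cases "c' = Node s p cts")
    case False
    then obtain c where c: "c \<in> fset cts" "c' \<in> subtrees c"
      using Node.prems by auto
    then obtain J where "insert (p @ lab s) I \<subseteq> J"
      "inspected_nodes lab c' J \<subseteq> inspected_nodes lab c (insert (p @ lab s) I)"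
      using Node.IH[OF c] by blast
    moreover have "inspected_nodes lab c (insert (p @ lab s) I) \<subseteq> inspected_nodes lab (Node s p cts) I"
      using c(1) by auto
    ultimately show ?thesis
      by blast
  qed blast
next
  case (Bud s p)
  then show ?case
    by (intro exI[of _ I]) simp
qed

lemma mem_nodes_at:
  "x \<in> nodes_at lab c P \<longleftrightarrow> (\<exists>c' \<in> subtrees c. snd (root c') @ lab (fst (root c')) = P \<and> x \<in> nodes c')"
proof -
  have "(case r of (s, q) \<Rightarrow> q @ lab s = P) = (snd r @ lab (fst r) = P)" for r :: "('a,'b) state \<times> pos"
    by (cases r) simp
  then show ?thesis
    unfolding nodes_at_def by (simp only:) blast
qed

lemma nodes_at_inspected_nodes:
  assumes "(s, q) \<in> nodes_at lab c P"
  shows "\<exists>J. (s, q, J) \<in> inspected_nodes lab c I \<and> (q @ lab s = P \<or> P \<in> J)"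
proof -
  obtain c' where c': "c' \<in> subtrees c" "(s, q) \<in> nodes c'"
    and root: "snd (root c') @ lab (fst (root c')) = P"
    using assms unfolding mem_nodes_at by blast
  then obtain s1 q1 cts where c'_eq: "c' = Node s1 q1 cts"
    by (cases c') auto
  obtain J where J: "inspected_nodes lab c' J \<subseteq> inspected_nodes lab c I"
    using inspected_nodes_subtrees[OF c'(1)] by blast
  obtain J' where J': "(s, q, J') \<in> inspected_nodes lab c' J"
    using c'(2) nodes_inspected_nodes[of c' lab J] by auto
  have "q @ lab s = P \<or> P \<in> J'"
  proof (cases "(s, q, J') = (s1, q1, J)")
    case False
    then have "insert (q1 @ lab s1) J \<subseteq> J'"
      using J' inspected_nodes_supset unfolding c'_eq by fastforce
    then show ?thesis
      using root c'_eq by simp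
  qed (use root c'_eq in simp)
  then show ?thesis
    using J J' by blast
qed

lemma nodes_subtrees: "c' \<in> subtrees c \<Longrightarrow> nodes c' \<subseteq> nodes c"
  by (induction c) auto

lemma nodes_at_subset: "nodes_at lab c P \<subseteq> nodes c"
proof
  fix x
  assume "x \<in> nodes_at lab c P"
  then obtain c' where "c' \<in> subtrees c" "x \<in> nodes c'"
    unfolding mem_nodes_at by blast
  then show "x \<in> nodes c"
    using nodes_subtrees by blast
qed

lemma nodes_prune_nodes_at: "nodes c = nodes (prune lab c P) \<union> nodes_at lab c P"
proof (induction c)
  case (Node s p cts)
  have sub: "nodes_at lab (Node s p cts) P \<subseteq> nodes (Node s p cts)"
    by (rule nodes_at_subset)
  show ?case
  proof (cases "p @ lab s = P")
    case True
    then have "x \<in> nodes_at lab (Node s p cts) P" if "x \<in> nodes (Node s p cts)" for x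
      unfolding mem_nodes_at using that by (intro bexI[of _ "Node s p cts"]) auto
    then show ?thesis
      using True sub by auto
  next
    case False
    then have "nodes_at lab (Node s p cts) P = (\<Union>c \<in> fset cts. nodes_at lab c P)"
      unfolding set_eq_iff by (auto simp: mem_nodes_at)
    then show ?thesis
      using False Node.IH by auto
  qed
qed (simp add: mem_nodes_at set_eq_iff)

lemma matches_goal:
  assumes "((l, r), P) \<in> matches R ar lab s q t"
  obtains xs where "(l, r) \<in> R" and "length xs = ar (head (subt t (q @ lab s)))"
    and "({(Fun (head (subt t (q @ lab s))) (map Var xs), q @ lab s)}, (l, P)) \<in> shift_state q s"
proof -
  obtain q0 xs where "P = q @ q0" "(l, r) \<in> R" "length xs = ar (head (subt t (q @ lab s)))"
    "({(Fun (head (subt t (q @ lab s))) (map Var xs), lab s)}, (l, q0)) \<in> s"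
    using assms unfolding matches_def out_def by blast
  then show thesis
    using that unfolding shift_state_def by (force simp: shift_obl_def)
qed

section \<open>Consistent configurations\<close>

locale set_automaton =
  fixes L :: "('f,'v) trm set" and ar :: "'f \<Rightarrow> nat" and lab :: "('f,'v) state \<Rightarrow> pos"
  assumes finite_lhss: "finite L"
    and wf_lhs: "l \<in> L \<Longrightarrow> wf ar l"
    and lhs_not_Var: "l \<in> L \<Longrightarrow> \<not> is_Var l"
    and label_ok: "label_ok L ar lab"
begin

text \<open>
  \<open>I\<close> stands for the positions of \<open>t\<close> inspected so far, i.e. the labels of the ancestors of a
  configuration.
\<close>

definition consistent_goal :: "('f,'v) trm \<Rightarrow> pos set \<Rightarrow> ('f,'v) goal \<Rightarrow> bool" where
  "consistent_goal t I g \<longleftrightarrow> (case g of (mo, (l, P)) \<Rightarrow> l \<in> L \<and> mo \<noteq> {} \<and>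
     (\<forall>(l', Q) \<in> mo. \<exists>u. Q = P @ u \<and> u \<in> poss l \<and> subt l u = l' \<and> \<not> is_Var l') \<and>
     (\<forall>u \<in> poss l. \<not> is_Var (subt l u) \<longrightarrow> (\<forall>Q \<in> pos_of mo. \<not> prefix Q (P @ u)) \<longrightarrow>
        P @ u \<in> I \<and> head (subt t (P @ u)) = head (subt l u)))"

definition consistent_state :: "('f,'v) trm \<Rightarrow> pos set \<Rightarrow> ('f,'v) state \<Rightarrow> bool" where
  "consistent_state t I A \<longleftrightarrow> (\<forall>g \<in> A. consistent_goal t I g) \<and>
     obl_poss A \<subseteq> poss t \<and> I \<subseteq> poss t \<and> prefix_antichain (obl_poss A) \<and>
     extensions (obl_poss A) \<inter> I = {} \<and> (\<forall>Q \<in> obl_poss A. \<forall>Y. strict_prefix Y Q \<longrightarrow> Y \<in> I)"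

lemma consistent_goal_mono: "consistent_goal t I g \<Longrightarrow> I \<subseteq> J \<Longrightarrow> consistent_goal t J g"
  unfolding consistent_goal_def by (fastforce split: prod.splits)

lemma consistent_goal_fresh: "l \<in> L \<Longrightarrow> consistent_goal t I ({(l, X)}, (l, X))"
  unfolding consistent_goal_def using lhs_not_Var by (auto simp: in_pos_of)

lemma consistent_goal_reduce:
  assumes cons: "consistent_goal t I (mo, (l, P))" and X: "(Fun f ls, X) \<in> mo"
    and head_t: "head (subt t X) = f" and nonempty: "reduce ar mo f X \<noteq> {}"
  shows "consistent_goal t (insert X I) (reduce ar mo f X, (l, P))"
proof -
  have l: "l \<in> L"
    and obl: "\<And>l'' Q. (l'', Q) \<in> mo \<Longrightarrow> \<exists>u. Q = P @ u \<and> u \<in> poss l \<and> subt l u = l'' \<and> \<not> is_Var l''"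
    and checked: "\<And>u. u \<in> poss l \<Longrightarrow> \<not> is_Var (subt l u) \<Longrightarrow> \<forall>Q \<in> pos_of mo. \<not> prefix Q (P @ u) \<Longrightarrow>
                        P @ u \<in> I \<and> head (subt t (P @ u)) = head (subt l u)"
    using cons unfolding consistent_goal_def by auto
  obtain uX where uX: "X = P @ uX" "uX \<in> poss l" "subt l uX = Fun f ls"
    using obl[OF X] by blast
  have len: "length ls = ar f"
    using wf_subt[OF wf_lhs[OF l] uX(2)] uX(3) by simp
  have obl': "\<exists>u. Q = P @ u \<and> u \<in> poss l \<and> subt l u = l'' \<and> \<not> is_Var l''"
    if "(l'', Q) \<in> reduce ar mo f X" for l'' Q
    using that unfolding mem_reduce
  proof (elim disjE exE conjE)
    fix l3 i
    assume "(l3, X) \<in> mo" "1 \<le> i" "i \<le> ar f" "\<not> is_Var (subt l3 [i])" "l'' = subt l3 [i]" "Q = X @ [i]"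
    moreover have "l3 = Fun f ls"
      using obl[OF \<open>(l3, X) \<in> mo\<close>] uX by auto
    ultimately show ?thesis
      using uX len by (intro exI[of _ "uX @ [i]"]) (auto simp: poss_append_iff Cons_in_poss_Fun subt_append)
  qed (use obl in blast)
  have checked': "P @ u \<in> insert X I \<and> head (subt t (P @ u)) = head (subt l u)"
    if u: "u \<in> poss l" "\<not> is_Var (subt l u)" "\<forall>Q \<in> pos_of (reduce ar mo f X). \<not> prefix Q (P @ u)"
    for u
  proof (cases "u = uX")
    case False
    then show ?thesis
      using checked[OF u(1,2) pos_of_reduce_not_prefix[OF X uX(1,3) len u(1,2) False u(3)]] by blast
  qed (use uX head_t in simp)
  show ?thesis
    unfolding consistent_goal_def using l nonempty obl' checked' by auto
qed

lemma consistent_goal_deriv: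
  assumes "consistent_state t I A" and "g \<in> deriv L ar (\<lambda>_. X) A (head (subt t X))"
  shows "consistent_goal t (insert X I) g"
  using assms(2)
proof (cases rule: deriv_cases)
  case (reduce mo ma l')
  then obtain ls where "l' = Fun (head (subt t X)) ls"
    by (cases l') auto
  then show ?thesis
    using reduce assms(1) consistent_goal_reduce[of t I mo "fst ma" "snd ma" _ ls X]
    unfolding consistent_state_def by auto
next
  case (keep mo ma)
  then show ?thesis
    using assms(1) consistent_goal_mono unfolding consistent_state_def by blast
qed (simp add: consistent_goal_fresh)

lemma consistent_state_subset: "B \<subseteq> A \<Longrightarrow> consistent_state t I A \<Longrightarrow> consistent_state t I B"
  unfolding consistent_state_def
  using obl_poss_mono[of B A] extensions_mono[of "obl_poss B" "obl_poss A"]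
    prefix_antichain_subset[of "obl_poss B" "obl_poss A"]
  by blast

lemma consistent_state_deriv:
  assumes cons: "consistent_state t I A" and X: "X \<in> obl_poss A" and "wf ar t" "ground t"
  shows "consistent_state t (insert X I) (deriv L ar (\<lambda>_. X) A (head (subt t X)))"
proof -
  let ?f = "head (subt t X)" and ?A' = "deriv L ar (\<lambda>_. X) A (head (subt t X))"
  have ac: "prefix_antichain (obl_poss A)" and strict: "\<forall>Q \<in> obl_poss A. \<forall>Y. strict_prefix Y Q \<longrightarrow> Y \<in> I"
    and X_t: "X \<in> poss t"
    using cons X unfolding consistent_state_def by blast+
  obtain g ts where ts: "subt t X = Fun g ts" "length ts = ar g"
    using ground_subt_is_Fun[OF \<open>ground t\<close> X_t] wf_subt[OF \<open>wf ar t\<close> X_t] by force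
  have children_t: "(\<lambda>i. X @ [i]) ` {1..ar ?f} \<subseteq> poss t"
    using X_t ts by (auto simp: poss_append_iff Cons_in_poss_Fun)
  have O': "obl_poss ?A' \<subseteq> (obl_poss A - {X}) \<union> (\<lambda>i. X @ [i]) ` {1..ar ?f}"
    by (rule obl_poss_deriv)
  have strict': "Y \<in> insert X I" if Q: "Q \<in> obl_poss ?A'" and Y: "strict_prefix Y Q" for Q Y
  proof -
    consider "Q \<in> obl_poss A" | i where "Q = X @ [i]"
      using O' Q by blast
    then show ?thesis
    proof cases
      case 2
      then have "Y = X \<or> strict_prefix Y X"
        using Y by (auto simp: strict_prefix_def prefix_snoc)
      then show ?thesis
        using strict X by blast
    qed (use strict Y in blast)
  qed
  show ?thesis
    using consistent_goal_deriv[OF cons] strict' O' children_t cons X_t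
      prefix_antichain_expand[OF ac X O'] extensions_expand[OF ac X O']
    unfolding consistent_state_def by blast
qed

definition sound_config :: "('f,'v) trm \<Rightarrow> pos set \<Rightarrow> ('f,'v) state \<Rightarrow> pos \<Rightarrow> bool" where
  "sound_config t I s q \<longleftrightarrow> s \<in> reach L ar lab \<and> finite s \<and> consistent_state t I (shift_state q s)"

definition abs_deriv :: "('f,'v) trm \<Rightarrow> ('f,'v) state \<Rightarrow> pos \<Rightarrow> ('f,'v) state" where
  "abs_deriv t s q = deriv L ar (\<lambda>_. q @ lab s) (shift_state q s) (head (subt t (q @ lab s)))"

lemma label_in_obl_poss:
  assumes "s \<in> reach L ar lab"
  shows "q @ lab s \<in> obl_poss (shift_state q s)"
proof -
  obtain mo l where "(mo, (l, [])) \<in> s" "lab s \<in> pos_of mo"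
    using label_ok assms unfolding label_ok_def by blast
  then have "(shift_obl q mo, (l, q)) \<in> shift_state q s" "q @ lab s \<in> pos_of (shift_obl q mo)"
    unfolding shift_state_def pos_of_shift_obl by force+
  then show ?thesis
    unfolding obl_poss_def by force
qed

lemma sound_config_label:
  assumes "sound_config t I s q"
  shows "q @ lab s \<in> poss t" and "q @ lab s \<notin> I"
    and "q @ lab s \<in> extensions (obl_poss (shift_state q s))"
    and "prefix Y (q @ lab s) \<Longrightarrow> Y \<noteq> q @ lab s \<Longrightarrow> Y \<in> I"
proof -
  let ?A = "shift_state q s"
  have X: "q @ lab s \<in> obl_poss ?A"
    using assms label_in_obl_poss unfolding sound_config_def by blast
  then show X_ext: "q @ lab s \<in> extensions (obl_poss ?A)"
    unfolding extensions_def by blast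
  have "obl_poss ?A \<subseteq> poss t" "extensions (obl_poss ?A) \<inter> I = {}"
    "\<forall>Q \<in> obl_poss ?A. \<forall>Y. strict_prefix Y Q \<longrightarrow> Y \<in> I"
    using assms unfolding sound_config_def consistent_state_def by simp_all
  then show "q @ lab s \<in> poss t" "q @ lab s \<notin> I"
    and "prefix Y (q @ lab s) \<Longrightarrow> Y \<noteq> q @ lab s \<Longrightarrow> Y \<in> I"
    using X X_ext by (auto simp: strict_prefix_def)
qed

lemma sound_config_s0: "sound_config t {} (s0 L) []"
proof -
  have "obl_poss (s0 L) \<subseteq> {[]}"
    unfolding obl_poss_def s0_def pos_of_def by auto
  moreover have "\<forall>g \<in> s0 L. consistent_goal t {} g"
    unfolding s0_def using consistent_goal_fresh by auto
  ultimately have "consistent_state t {} (s0 L)"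
    unfolding consistent_state_def prefix_antichain_def by (auto simp: strict_prefix_def)
  moreover have "finite (s0 L)"
    unfolding s0_def using finite_lhss by (simp add: setcompr_eq_image)
  ultimately show ?thesis
    unfolding sound_config_def by (simp add: reach.intros(1))
qed

lemma finite_children: "sound_config t I s q \<Longrightarrow> finite (children L ar lab s q t)"
  unfolding sound_config_def children_def using finite_lhss by (simp add: finite_delta)

lemma head_label_repl:
  assumes "sound_config t I s q" and "P \<in> poss t" and "P \<notin> I" and "q @ lab s \<noteq> P"
  shows "head (subt (repl t P u) (q @ lab s)) = head (subt t (q @ lab s))"
  using head_subt_repl sound_config_label[OF assms(1)] assms(2-4) by blast

context
  fixes t :: "('f,'v) trm"
  assumes wf_t: "wf ar t" and ground_t: "ground t"
begin

lemma consistent_state_abs_deriv: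
  assumes "sound_config t I s q"
  shows "consistent_state t (insert (q @ lab s) I) (abs_deriv t s q)"
proof -
  have "s \<in> reach L ar lab" "consistent_state t I (shift_state q s)"
    using assms unfolding sound_config_def by simp_all
  then show ?thesis
    unfolding abs_deriv_def using consistent_state_deriv[OF _ label_in_obl_poss wf_t ground_t] by blast
qed

lemma child_dep_class:
  assumes sound: "sound_config t I s q" and child: "(s', p') \<in> children L ar lab s q t"
  obtains K where "K \<in> dep_classes (deriv L ar lab s (head (subt t (q @ lab s))))"
    and "s' = lift K" and "p' = gcp_goals K" and "shift_state (q @ p') s' = shift_state q K"
    and "shift_state q K \<subseteq> abs_deriv t s q"
proof -
  let ?f = "head (subt t (q @ lab s))"
  obtain K where K: "K \<in> dep_classes (deriv L ar lab s ?f)" "s' = lift K" "p' = gcp_goals K"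
    using child unfolding children_def delta_def by blast
  have "shift_state q K \<subseteq> shift_state q (deriv L ar lab s ?f)"
    unfolding shift_state_def using dep_classes_subset[OF K(1)] by (rule image_mono)
  also have "\<dots> \<subseteq> abs_deriv t s q"
    unfolding abs_deriv_def by (rule shift_state_deriv)
  finally have sub: "shift_state q K \<subseteq> abs_deriv t s q" .
  have cons: "consistent_state t (insert (q @ lab s) I) (shift_state q K)"
    using consistent_state_subset[OF sub consistent_state_abs_deriv[OF sound]] .
  have "prefix P Q" if "(mo, (l, P)) \<in> K" "(l', Q) \<in> mo" for mo l P l' Q
  proof -
    have "consistent_goal t (insert (q @ lab s) I) (shift_obl q mo, (l, q @ P))"
      using cons that(1) unfolding consistent_state_def shift_state_def by force
    moreover have "(l', q @ Q) \<in> shift_obl q mo"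
      using that(2) by simp
    ultimately obtain u where "q @ Q = (q @ P) @ u"
      unfolding consistent_goal_def by fastforce
    then show ?thesis
      by simp
  qed
  then have "shift_state (q @ p') s' = shift_state q K"
    unfolding K(2,3) by (rule shift_state_lift)
  then show thesis
    using that K sub by blast
qed

lemma sound_config_child:
  assumes "sound_config t I s q" and "(s', p') \<in> children L ar lab s q t"
  shows "sound_config t (insert (q @ lab s) I) s' (q @ p')"
proof -
  obtain K where K: "K \<in> dep_classes (deriv L ar lab s (head (subt t (q @ lab s))))"
    "s' = lift K" "shift_state (q @ p') s' = shift_state q K" "shift_state q K \<subseteq> abs_deriv t s q"
    using child_dep_class[OF assms] by metis
  have "s' \<in> reach L ar lab"
    using assms reach.intros(2)[of s L ar lab] unfolding sound_config_def children_def by blast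
  moreover have "finite K"
    using assms(1) dep_classes_subset[OF K(1)] finite_deriv[OF _ finite_lhss]
    unfolding sound_config_def by (meson finite_subset)
  then have "finite s'"
    unfolding K(2) lift_def Let_def by simp
  moreover have "consistent_state t (insert (q @ lab s) I) (shift_state (q @ p') s')"
    using consistent_state_subset[OF K(4) consistent_state_abs_deriv[OF assms(1)]] K(3) by simp
  ultimately show ?thesis
    unfolding sound_config_def by simp
qed

lemma extensions_child:
  assumes sound: "sound_config t I s q" and child: "(s', p') \<in> children L ar lab s q t"
  shows "extensions (obl_poss (shift_state (q @ p') s')) \<subseteq>
           extensions (obl_poss (shift_state q s)) - {q @ lab s}"
proof -
  obtain K where "shift_state (q @ p') s' = shift_state q K" "shift_state q K \<subseteq> abs_deriv t s q"
    using child_dep_class[OF assms] by metis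
  then have "obl_poss (shift_state (q @ p') s') \<subseteq> obl_poss (abs_deriv t s q)"
    by (simp add: obl_poss_mono)
  also have "\<dots> \<subseteq> (obl_poss (shift_state q s) - {q @ lab s}) \<union>
      (\<lambda>i. (q @ lab s) @ [i]) ` {1..ar (head (subt t (q @ lab s)))}"
    unfolding abs_deriv_def by (rule obl_poss_deriv)
  finally show ?thesis
    using extensions_expand label_in_obl_poss sound unfolding sound_config_def consistent_state_def
    by blast
qed

lemma children_extensions_disjoint:
  assumes sound: "sound_config t I s q"
    and child1: "(s1, p1) \<in> children L ar lab s q t" and child2: "(s2, p2) \<in> children L ar lab s q t"
    and "(s1, p1) \<noteq> (s2, p2)"
  shows "extensions (obl_poss (shift_state (q @ p1) s1)) \<inter> extensions (obl_poss (shift_state (q @ p2) s2)) = {}"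
proof -
  obtain K1 where K1: "K1 \<in> dep_classes (deriv L ar lab s (head (subt t (q @ lab s))))"
    "s1 = lift K1" "p1 = gcp_goals K1" "shift_state (q @ p1) s1 = shift_state q K1"
    "shift_state q K1 \<subseteq> abs_deriv t s q"
    using child_dep_class[OF sound child1] by metis
  obtain K2 where K2: "K2 \<in> dep_classes (deriv L ar lab s (head (subt t (q @ lab s))))"
    "s2 = lift K2" "p2 = gcp_goals K2" "shift_state (q @ p2) s2 = shift_state q K2"
    "shift_state q K2 \<subseteq> abs_deriv t s q"
    using child_dep_class[OF sound child2] by metis
  have "K1 \<noteq> K2"
    using K1(2,3) K2(2,3) \<open>(s1, p1) \<noteq> (s2, p2)\<close> by blast
  then have "obl_poss (shift_state q K1) \<inter> obl_poss (shift_state q K2) = {}"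
    using dep_classes_disjoint[OF K1(1) K2(1)] by (auto simp: obl_poss_shift_state)
  moreover have "prefix_antichain (obl_poss (abs_deriv t s q))"
    using consistent_state_abs_deriv[OF sound] unfolding consistent_state_def by blast
  ultimately show ?thesis
    unfolding K1(4) K2(4) using extensions_disjoint obl_poss_mono[OF K1(5)] obl_poss_mono[OF K2(5)]
    by blast
qed

text \<open>
  Existence is by induction on the number of positions of \<open>t\<close> below the obligations: passing to
  a child loses at least the label of the parent.
\<close>

lemma compl_exists: "sound_config t I s q \<Longrightarrow> \<exists>D. compl L ar lab t s q D"
proof (induction "card (extensions (obl_poss (shift_state q s)) \<inter> poss t)" arbitrary: I s q
    rule: less_induct)
  case less
  let ?ch = "children L ar lab s q t"
  have "\<exists>D. compl L ar lab t (fst c) (q @ snd c) D" if c_child: "c \<in> ?ch" for c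
  proof -
    obtain s' p' where c: "c = (s', p')" and child: "(s', p') \<in> ?ch"
      using c_child by (cases c) auto
    have "extensions (obl_poss (shift_state (q @ p') s')) \<inter> poss t \<subset>
        extensions (obl_poss (shift_state q s)) \<inter> poss t"
      using extensions_child[OF less.prems child] sound_config_label[OF less.prems]
      by blast
    then have "card (extensions (obl_poss (shift_state (q @ p') s')) \<inter> poss t) <
        card (extensions (obl_poss (shift_state q s)) \<inter> poss t)"
      by (meson finite_Int finite_poss psubset_card_mono)
    then show ?thesis
      using less.hyps[OF _ sound_config_child[OF less.prems child]] c by simp
  qed
  then have "\<forall>c \<in> ?ch. \<exists>D. compl L ar lab t (fst c) (q @ snd c) D"
    by blast
  then obtain F where F: "\<forall>c \<in> ?ch. compl L ar lab t (fst c) (q @ snd c) (F c)"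
    by (rule bchoice[THEN exE])
  have "fset (Abs_fset (F ` ?ch)) = F ` ?ch"
    using finite_children[OF less.prems] by (simp add: Abs_fset_inverse)
  then have "compl L ar lab t s q (Node s q (Abs_fset (F ` ?ch)))"
    using F by (intro compl.intros) fastforce+
  then show ?case
    by blast
qed

lemma compl_completed: "compl L ar lab t (s0 L) [] (completed L ar lab t)"
proof -
  obtain D where D: "compl L ar lab t (s0 L) [] D"
    using compl_exists sound_config_s0 by blast
  then have "completed L ar lab t = D"
    unfolding completed_def using compl_unique by blast
  then show ?thesis
    using D by simp
qed

lemma compl_inspected_sound:
  "compl L ar lab t s q D \<Longrightarrow> sound_config t I s q \<Longrightarrow> (s', q', I') \<in> inspected_nodes lab D I \<Longrightarrow>
   sound_config t I' s' q' \<and> q' @ lab s' \<in> extensions (obl_poss (shift_state q s))"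
proof (induction D arbitrary: s q I)
  case (Node s0 q0 cts)
  then have root: "s0 = s" "q0 = q"
    by (simp_all add: compl_Node)
  show ?case
  proof (cases "(s', q', I') = (s, q, I)")
    case True
    then show ?thesis
      using Node.prems(2) sound_config_label(3)[OF Node.prems(2)] by auto
  next
    case False
    then obtain c where c: "c \<in> fset cts" "(s', q', I') \<in> inspected_nodes lab c (insert (q @ lab s) I)"
      using Node.prems(3) root by auto
    then obtain s'' p'' where child: "(s'', p'') \<in> children L ar lab s q t"
      and compl: "compl L ar lab t s'' (q @ p'') c"
      using Node.prems(1) root by (auto simp: compl_Node)
    then show ?thesis
      using Node.IH[OF c(1) compl sound_config_child[OF Node.prems(2) child] c(2)]
        extensions_child[OF Node.prems(2) child] by blast
  qed
qed (simp add: compl_Bud)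

lemma compl_inspected_child:
  assumes compl: "compl L ar lab t s q (Node s' q' cts)" and sound: "sound_config t I s q"
    and mem: "(s1, q1, I1) \<in> inspected_nodes lab (Node s' q' cts) I" and not_root: "(s1, q1, I1) \<noteq> (s, q, I)"
  obtains c s'' p'' where "c \<in> fset cts" and "(s'', p'') \<in> children L ar lab s q t"
    and "compl L ar lab t s'' (q @ p'') c" and "(s1, q1, I1) \<in> inspected_nodes lab c (insert (q @ lab s) I)"
    and "q1 @ lab s1 \<in> extensions (obl_poss (shift_state (q @ p'') s''))"
proof -
  have root: "s' = s" "q' = q"
    using compl by (simp_all add: compl_Node)
  obtain c where c: "c \<in> fset cts" "(s1, q1, I1) \<in> inspected_nodes lab c (insert (q @ lab s) I)"
    using mem not_root root by auto
  then obtain s'' p'' where child: "(s'', p'') \<in> children L ar lab s q t"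
    and compl_c: "compl L ar lab t s'' (q @ p'') c"
    using compl root by (auto simp: compl_Node)
  then show thesis
    using that c compl_inspected_sound[OF compl_c sound_config_child[OF sound child] c(2)] by blast
qed

lemma compl_inspected_label_inj:
  "compl L ar lab t s q D \<Longrightarrow> sound_config t I s q \<Longrightarrow>
   (s1, q1, I1) \<in> inspected_nodes lab D I \<Longrightarrow> (s2, q2, I2) \<in> inspected_nodes lab D I \<Longrightarrow>
   q1 @ lab s1 = q2 @ lab s2 \<Longrightarrow> (s1, q1, I1) = (s2, q2, I2)"
proof (induction D arbitrary: s q I)
  case (Node s0 q0 cts)
  note child = compl_inspected_child[OF Node.prems(1,2)]
  have not_root_label: "q' @ lab s' \<noteq> q @ lab s"
    if "(s', q', I') \<in> inspected_nodes lab (Node s0 q0 cts) I" and "(s', q', I') \<noteq> (s, q, I)"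
    for s' q' I'
    using child[OF that] extensions_child[OF Node.prems(2)] by blast
  consider "(s1, q1, I1) = (s, q, I)" | "(s2, q2, I2) = (s, q, I)"
    | "(s1, q1, I1) \<noteq> (s, q, I)" "(s2, q2, I2) \<noteq> (s, q, I)"
    by blast
  then show ?case
  proof cases
    case 1
    then show ?thesis
      using not_root_label[OF Node.prems(4)] Node.prems(5) by fastforce
  next
    case 2
    then show ?thesis
      using not_root_label[OF Node.prems(3)] Node.prems(5) by fastforce
  next
    case 3
    obtain c1 sa pa where c1: "c1 \<in> fset cts" "(sa, pa) \<in> children L ar lab s q t"
      "compl L ar lab t sa (q @ pa) c1" "(s1, q1, I1) \<in> inspected_nodes lab c1 (insert (q @ lab s) I)"
      "q1 @ lab s1 \<in> extensions (obl_poss (shift_state (q @ pa) sa))"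
      using child[OF Node.prems(3) 3(1)] by blast
    obtain c2 sb pb where c2: "c2 \<in> fset cts" "(sb, pb) \<in> children L ar lab s q t"
      "compl L ar lab t sb (q @ pb) c2" "(s2, q2, I2) \<in> inspected_nodes lab c2 (insert (q @ lab s) I)"
      "q2 @ lab s2 \<in> extensions (obl_poss (shift_state (q @ pb) sb))"
      using child[OF Node.prems(4) 3(2)] by blast
    show ?thesis
    proof (cases "(sa, pa) = (sb, pb)")
      case True
      then have "c1 = c2"
        using c1(3) c2(3) compl_unique by blast
      then show ?thesis
        using Node.IH[OF c1(1,3) sound_config_child[OF Node.prems(2) c1(2)] c1(4)] c2(4) Node.prems(5)
        by blast
    next
      case False
      then show ?thesis
        using children_extensions_disjoint[OF Node.prems(2) c1(2) c2(2)] c1(5) c2(5) Node.prems(5)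
        by auto
    qed
  qed
qed (simp add: compl_Bud)

lemma frag_prune:
  assumes P: "P \<in> poss t"
  shows "frag c D \<Longrightarrow> compl L ar lab t s q D \<Longrightarrow> sound_config t I s q \<Longrightarrow> P \<notin> I \<Longrightarrow>
    compl L ar lab (repl t P u) s q D' \<Longrightarrow> frag (prune lab c P) D'"
proof (induction c arbitrary: s q I D D')
  case (Bud s0 q0)
  obtain cs where "D' = Node s q cs"
    using compl_root[OF Bud(5)] by blast
  moreover have "s0 = s" "q0 = q"
    using frag_root[OF Bud(1)] compl_root[OF Bud(2)] by auto
  ultimately show ?case
    by (simp add: frag.intros(2))
next
  case (Node s0 q0 cts0)
  let ?t' = "repl t P u"
  obtain cts where D: "D = Node s q cts"
    using compl_root[OF Node.prems(2)] by blast
  obtain cs where D': "D' = Node s q cs"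
    using compl_root[OF Node.prems(5)] by blast
  have root: "s0 = s" "q0 = q"
    using frag_root[OF Node.prems(1)] D by auto
  have compl: "compl L ar lab t s q (Node s q cts)" and compl': "compl L ar lab ?t' s q (Node s q cs)"
    using Node.prems(2,5) D D' by simp_all
  show ?case
  proof (cases "q @ lab s = P")
    case True
    then show ?thesis
      using root D' by (simp add: frag.intros(2))
  next
    case False
    then have same_children: "children L ar lab s q ?t' = children L ar lab s q t"
      using head_label_repl[OF Node.prems(3) P Node.prems(4)] unfolding children_def by simp
    have "frag (prune lab a P) c" if a: "a \<in> fset cts0" and b: "b \<in> fset cts" and c: "c \<in> fset cs"
      and frag: "frag a b" and "root b = root c" for a b c
    proof -
      obtain s'' p'' where child: "(s'', p'') \<in> children L ar lab s q t" "root b = (s'', q @ p'')"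
        "compl L ar lab t s'' (q @ p'') b"
        using compl_Node_child[OF compl b] by metis
      obtain s''' p''' where "root c = (s''', q @ p''')" "compl L ar lab ?t' s''' (q @ p''') c"
        using compl_Node_child[OF compl' c] by metis
      then have "compl L ar lab ?t' s'' (q @ p'') c"
        using child(2) \<open>root b = root c\<close> by simp
      moreover have "P \<notin> insert (q @ lab s) I"
        using False Node.prems(4) by auto
      ultimately show ?thesis
        using Node.IH[OF a frag child(3) sound_config_child[OF Node.prems(3) child(1)]] by blast
    qed
    moreover have "root ` fset cts = root ` fset cs"
      using compl_Node_roots[OF compl] compl_Node_roots[OF compl'] same_children by simp
    ultimately have "frag (Node s q (fimage (\<lambda>c. prune lab c P) cts0)) (Node s q cs)"
      using Node.prems(1) compl_Node_inj_root[OF compl] compl_Node_inj_root[OF compl']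
      unfolding D root by (intro frag_Node_fimage[where B = cts]) (simp_all add: root_prune)
    then show ?thesis
      using False root D' by simp
  qed
qed

end

end

section \<open>Reported redexes and the loop invariant\<close>

locale left_linear_set_automaton = set_automaton "lhss R" ar lab
  for R :: "('f,'v) rule set" and ar :: "'f \<Rightarrow> nat" and lab :: "('f,'v) state \<Rightarrow> pos" +
  assumes trs: "trs ar R" and left_linear: "left_linear R"
begin

context
  fixes t :: "('f,'v) trm"
  assumes wf_t: "wf ar t" and ground_t: "ground t"
begin

lemma matches_sound:
  assumes sound: "sound_config t I s q" and m: "((l, r), P) \<in> matches R ar lab s q t"
  shows "(l, r) \<in> R" and "\<exists>\<sigma>. subt t P = subst \<sigma> l" and "P \<in> poss t"
    and "\<exists>u. q @ lab s = P @ u \<and> u \<in> poss l \<and> \<not> is_Var (subt l u)"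
    and "\<And>u. u \<in> poss l \<Longrightarrow> \<not> is_Var (subt l u) \<Longrightarrow> P @ u = q @ lab s \<or> P @ u \<in> I"
proof -
  let ?X = "q @ lab s" and ?f = "head (subt t (q @ lab s))"
  obtain xs where lr: "(l, r) \<in> R"
    and goal: "({(Fun ?f (map Var xs), ?X)}, (l, P)) \<in> shift_state q s"
    using matches_goal[OF m] by blast
  show "(l, r) \<in> R"
    by (rule lr)
  have cons: "consistent_goal t I ({(Fun ?f (map Var xs), ?X)}, (l, P))"
    using goal sound unfolding sound_config_def consistent_state_def by blast
  then have l: "l \<in> lhss R"
    unfolding consistent_goal_def by simp
  from cons have "\<exists>u. ?X = P @ u \<and> u \<in> poss l \<and> subt l u = Fun ?f (map Var xs)"
    unfolding consistent_goal_def by simp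
  then obtain uX where uX: "?X = P @ uX" "uX \<in> poss l" "subt l uX = Fun ?f (map Var xs)"
    by blast
  then show "\<exists>u. ?X = P @ u \<and> u \<in> poss l \<and> \<not> is_Var (subt l u)"
    by auto
  from cons have checked: "\<And>u. u \<in> poss l \<Longrightarrow> \<not> is_Var (subt l u) \<Longrightarrow> \<not> prefix ?X (P @ u) \<Longrightarrow>
                    P @ u \<in> I \<and> head (subt t (P @ u)) = head (subt l u)"
    unfolding consistent_goal_def pos_of_def by simp
  have below_X: "P @ u = ?X \<or> P @ u \<in> I \<and> head (subt t (P @ u)) = head (subt l u)"
    if u: "u \<in> poss l" "\<not> is_Var (subt l u)" for u
  proof (cases "prefix ?X (P @ u)")
    case True
    then obtain w where w: "u = uX @ w"
      using uX(1) by (auto simp: prefix_def)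
    show ?thesis
    proof (cases w)
      case (Cons i w')
      then have "1 \<le> i" "i \<le> length xs"
        using u(1) uX(3) w by (auto simp: poss_append_iff Cons_in_poss_Fun)
      then have "subt l u = Var (xs ! (i - 1))"
        using uX(3) w Cons by (simp add: subt_append)
      then show ?thesis
        using u(2) by simp
    qed (use w uX(1) in simp)
  qed (use checked u in blast)
  then show "\<And>u. u \<in> poss l \<Longrightarrow> \<not> is_Var (subt l u) \<Longrightarrow> P @ u = ?X \<or> P @ u \<in> I"
    by blast
  have X_t: "?X \<in> poss t" and I_t: "I \<subseteq> poss t"
    using sound sound_config_label(1) unfolding sound_config_def consistent_state_def by blast+
  then show P_t: "P \<in> poss t"
    using uX(1) by (simp add: poss_append_iff)
  have "u \<in> poss (subt t P) \<and> head (subt (subt t P) u) = head (subt l u)"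
    if "u \<in> poss l" "\<not> is_Var (subt l u)" for u
    using below_X[OF that] X_t I_t uX P_t by (auto simp: poss_append_iff subt_append)
  then show "\<exists>\<sigma>. subt t P = subst \<sigma> l"
    using linear_matchI[OF _ wf_lhs[OF l] wf_subt[OF wf_t P_t] ground_subt[OF ground_t P_t]]
      left_linear lr unfolding left_linear_def by blast
qed

lemma inspected_completed_sound:
  assumes "(s, q, J) \<in> inspected_nodes lab (completed (lhss R) ar lab t) {}"
  shows "sound_config t J s q"
  using compl_inspected_sound[OF wf_t ground_t compl_completed[OF wf_t ground_t] sound_config_s0 assms]
  by blast

text \<open>
  If the labels of the two nodes differed, each label would be inspected by the other node, making
  each node an ancestor of the other.
\<close>

lemma matches_unique:
  assumes n1: "(s1, q1, I1) \<in> inspected_nodes lab (completed (lhss R) ar lab t) {}"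
    and n2: "(s2, q2, I2) \<in> inspected_nodes lab (completed (lhss R) ar lab t) {}"
    and m1: "red \<in> matches R ar lab s1 q1 t" and m2: "red \<in> matches R ar lab s2 q2 t"
  shows "(s1, q1, I1) = (s2, q2, I2)"
proof -
  let ?C = "completed (lhss R) ar lab t"
  have label_inj: "(s, q, J) = (s', q', J')"
    if "(s, q, J) \<in> inspected_nodes lab ?C {}" "(s', q', J') \<in> inspected_nodes lab ?C {}"
      "q @ lab s = q' @ lab s'" for s q J s' q' J'
    using compl_inspected_label_inj[OF wf_t ground_t compl_completed[OF wf_t ground_t] sound_config_s0]
      that by blast
  obtain l r P where red: "red = ((l, r), P)"
    by (metis prod.exhaust)
  note sound1 = inspected_completed_sound[OF n1] and sound2 = inspected_completed_sound[OF n2]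
  have one: "q1 @ lab s1 = q2 @ lab s2 \<or> q1 @ lab s1 \<in> I2"
    using matches_sound(4)[OF sound1 m1[unfolded red]] matches_sound(5)[OF sound2 m2[unfolded red]]
    by metis
  have two: "q2 @ lab s2 = q1 @ lab s1 \<or> q2 @ lab s2 \<in> I1"
    using matches_sound(4)[OF sound2 m2[unfolded red]] matches_sound(5)[OF sound1 m1[unfolded red]]
    by metis
  have ancestor: "I1 \<subseteq> I2 \<and> q1 @ lab s1 \<notin> I1"
    if in_I: "q1 @ lab s1 \<in> I2" and n1: "(s1, q1, I1) \<in> inspected_nodes lab ?C {}"
      and n2: "(s2, q2, I2) \<in> inspected_nodes lab ?C {}"
    for s1 q1 I1 s2 q2 I2
  proof -
    obtain s q J where "(s, q, J) \<in> inspected_nodes lab ?C {}" "q @ lab s = q1 @ lab s1"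
      "q1 @ lab s1 \<notin> J" "insert (q1 @ lab s1) J \<subseteq> I2"
      using inspected_nodes_ancestor[OF n2 in_I] by blast
    then show ?thesis
      using label_inj[OF _ n1] by blast
  qed
  show ?thesis
  proof (cases "q1 @ lab s1 = q2 @ lab s2")
    case True
    then show ?thesis
      using label_inj[OF n1 n2] by blast
  next
    case False
    then have "I1 \<subseteq> I2" "q1 @ lab s1 \<notin> I1" "I2 \<subseteq> I1"
      using one two ancestor[OF _ n1 n2] ancestor[OF _ n2 n1] by auto
    then show ?thesis
      using False one by blast
  qed
qed

lemma matches_prune_unchanged:
  assumes frag: "frag ct (completed (lhss R) ar lab t)" and P: "P \<in> poss t"
    and node: "(s, q) \<in> nodes (prune lab ct P)"
  shows "matches R ar lab s q (repl t P u) = matches R ar lab s q t"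
proof -
  obtain J where J: "(s, q, J) \<in> inspected_nodes lab (completed (lhss R) ar lab t) {}"
    "q @ lab s \<noteq> P" "P \<notin> J"
    using pruned_node_inspected[OF frag node] by blast
  then show ?thesis
    using head_label_repl[OF inspected_completed_sound[OF J(1)] P] unfolding matches_def by simp
qed

lemma matches_prune_disjoint:
  assumes frag: "frag ct (completed (lhss R) ar lab t)"
    and node: "(s, q) \<in> nodes (prune lab ct P)" and node': "(s', q') \<in> nodes_at lab ct P"
  shows "matches R ar lab s q t \<inter> matches R ar lab s' q' t = {}"
proof -
  obtain J where J: "(s, q, J) \<in> inspected_nodes lab (completed (lhss R) ar lab t) {}"
    "q @ lab s \<noteq> P" "P \<notin> J"
    using pruned_node_inspected[OF frag node] by blast
  obtain J' where J': "(s', q', J') \<in> inspected_nodes lab ct {}" "q' @ lab s' = P \<or> P \<in> J'"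
    using nodes_at_inspected_nodes[OF node'] by blast
  have "(s', q', J') \<in> inspected_nodes lab (completed (lhss R) ar lab t) {}"
    using J'(1) frag_inspected_nodes[OF frag] by blast
  then show ?thesis
    using matches_unique[OF J(1)] J J'(2) by blast
qed

lemma matches_prune:
  assumes frag: "frag ct (completed (lhss R) ar lab t)" and P: "P \<in> poss t"
  shows "\<Union> {matches R ar lab s q t | s q. (s, q) \<in> nodes ct} -
           \<Union> {matches R ar lab s q t | s q. (s, q) \<in> nodes_at lab ct P} =
         \<Union> {matches R ar lab s q (repl t P u) | s q. (s, q) \<in> nodes (prune lab ct P)}"
    (is "?reds - ?removed = ?kept")
proof (intro equalityI subsetI)
  fix x
  assume x: "x \<in> ?reds - ?removed"
  then obtain s q where sq: "(s, q) \<in> nodes ct" "x \<in> matches R ar lab s q t"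
    by blast
  then have "(s, q) \<notin> nodes_at lab ct P"
    using x by blast
  then have "(s, q) \<in> nodes (prune lab ct P)"
    using sq(1) nodes_prune_nodes_at by blast
  then show "x \<in> ?kept"
    using sq(2) matches_prune_unchanged[OF frag P] by blast
next
  fix x
  assume "x \<in> ?kept"
  then obtain s q where sq: "(s, q) \<in> nodes (prune lab ct P)" "x \<in> matches R ar lab s q (repl t P u)"
    by blast
  then have x: "x \<in> matches R ar lab s q t"
    using matches_prune_unchanged[OF frag P] by blast
  then have "x \<in> ?reds"
    using sq(1) nodes_prune_nodes_at by blast
  moreover have "x \<notin> ?removed"
    using matches_prune_disjoint[OF frag sq(1)] x by blast
  ultimately show "x \<in> ?reds - ?removed"
    by blast
qed

end

lemma invariant_init:
  assumes "wf ar t0" and "ground t0"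
  shows "invariant R ar lab t0 (t0, Bud (s0 (lhss R)) [], {})"
proof -
  obtain cts where "completed (lhss R) ar lab t0 = Node (s0 (lhss R)) [] cts"
    using compl_root[OF compl_completed[OF assms]] by blast
  then show ?thesis
    unfolding invariant_def by (simp add: frag.intros(2))
qed

lemma invariant_grow:
  assumes "wf ar t0" "ground t0" and inv: "invariant R ar lab t0 (t, ct, reds)" and bud: "(s, p) \<in> buds ct"
  shows "invariant R ar lab t0 (t, grow (lhss R) ar lab ct s p t, reds \<union> matches R ar lab s p t)"
proof -
  let ?C = "completed (lhss R) ar lab t"
  have steps: "(t0, t) \<in> (rstep R)\<^sup>*" and frag: "frag ct ?C"
    and reds: "reds = \<Union> {matches R ar lab s p t | s p. (s, p) \<in> nodes ct}"
    using inv unfolding invariant_def by auto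
  have t: "wf ar t" "ground t"
    using rsteps_preserve_wf_ground[OF trs steps assms(1,2)] by auto
  have compl: "compl (lhss R) ar lab t (s0 (lhss R)) [] ?C"
    using compl_completed[OF t] .
  have "(s, p) \<in> nodes ?C"
    using frag_buds[OF frag] compl_buds[OF compl] bud by blast
  then obtain J where "(s, p, J) \<in> inspected_nodes lab ?C {}"
    using nodes_inspected_nodes[of ?C lab "{}"] by auto
  then have "finite (children (lhss R) ar lab s p t)"
    using finite_children inspected_completed_sound[OF t] by blast
  then have "nodes (grow (lhss R) ar lab ct s p t) = insert (s, p) (nodes ct)"
    using nodes_grow bud by metis
  then have "reds \<union> matches R ar lab s p t =
      \<Union> {matches R ar lab s' p' t | s' p'. (s', p') \<in> nodes (grow (lhss R) ar lab ct s p t)}"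
    unfolding reds by auto
  moreover have "frag (grow (lhss R) ar lab ct s p t) ?C"
    using frag_grow[OF frag compl] .
  ultimately show ?thesis
    using steps unfolding invariant_def by simp
qed

lemma invariant_reduce:
  assumes "wf ar t0" "ground t0" and inv: "invariant R ar lab t0 (t, ct, reds)" and red: "red \<in> reds"
  shows "invariant R ar lab t0 (apply_redex t red, prune lab ct (snd red),
           reds - \<Union> {matches R ar lab s q t | s q. (s, q) \<in> nodes_at lab ct (snd red)})"
proof -
  obtain l r P where red_eq: "red = ((l, r), P)"
    by (metis prod.exhaust)
  let ?t' = "apply_redex t red" and ?C = "completed (lhss R) ar lab t"
  have steps: "(t0, t) \<in> (rstep R)\<^sup>*" and frag: "frag ct ?C"
    and reds: "reds = \<Union> {matches R ar lab s p t | s p. (s, p) \<in> nodes ct}"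
    using inv unfolding invariant_def by auto
  have t: "wf ar t" "ground t"
    using rsteps_preserve_wf_ground[OF trs steps assms(1,2)] by auto
  obtain s1 q1 J1 where "(s1, q1, J1) \<in> inspected_nodes lab ct {}" "red \<in> matches R ar lab s1 q1 t"
    using red nodes_inspected_nodes[of ct lab "{}"] unfolding reds by fastforce
  then have sound1: "sound_config t J1 s1 q1" and m1: "((l, r), P) \<in> matches R ar lab s1 q1 t"
    using frag_inspected_nodes[OF frag] inspected_completed_sound[OF t] red_eq by blast+
  note redex = apply_redex_rstep[OF matches_sound(1,3,2)[OF t sound1 m1], folded red_eq]
  then obtain u where t': "?t' = repl t P u"
    by blast
  have "(t0, ?t') \<in> (rstep R)\<^sup>*"
    using steps redex(1) by simp
  moreover have "wf ar ?t'" "ground ?t'"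
    using rstep_preserves_wf_ground[OF trs redex(1) t] by auto
  then have "compl (lhss R) ar lab (repl t P u) (s0 (lhss R)) [] (completed (lhss R) ar lab ?t')"
    using compl_completed t' by metis
  then have "frag (prune lab ct P) (completed (lhss R) ar lab ?t')"
    using frag_prune[OF t matches_sound(3)[OF t sound1 m1] frag compl_completed[OF t] sound_config_s0]
    by blast
  moreover have "reds - \<Union> {matches R ar lab s q t | s q. (s, q) \<in> nodes_at lab ct P} =
      \<Union> {matches R ar lab s q ?t' | s q. (s, q) \<in> nodes (prune lab ct P)}"
    unfolding reds t' by (rule matches_prune[OF t frag matches_sound(3)[OF t sound1 m1]])
  ultimately show ?thesis
    unfolding invariant_def red_eq by simp
qed

lemma loop_body_invariant:
  assumes "wf ar t0" "ground t0" and "strategy select" and inv: "invariant R ar lab t0 (t, ct, reds)"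
    and "buds ct \<noteq> {} \<or> reds \<noteq> {}"
  shows "invariant R ar lab t0 (loop_body R ar lab select (t, ct, reds))"
proof -
  have "select ct reds \<in> Inl ` buds ct \<union> Inr ` reds"
    using assms(3,5) unfolding strategy_def by blast
  then consider (bud) s p where "(s, p) \<in> buds ct" "select ct reds = Inl (s, p)"
    | (redex) red where "red \<in> reds" "select ct reds = Inr red"
    by auto
  then show ?thesis
  proof cases
    case bud
    then show ?thesis
      using invariant_grow[OF assms(1,2) inv bud(1)] unfolding loop_body_def by simp
  next
    case redex
    then show ?thesis
      using invariant_reduce[OF assms(1,2) inv redex(1)] unfolding loop_body_def by (simp add: Let_def)
  qed
qed

end

theorem lemma2:
  fixes R :: "('f,'v) rule set" and ar :: "'f \<Rightarrow> nat"
    and lab :: "('f,'v) state \<Rightarrow> pos" and t0 :: "('f,'v) trm"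
    and select :: "('f,'v) strategy"
  assumes "finite (UNIV :: 'f set)"
    and "trs ar R" and "left_linear R"
    and "label_ok (lhss R) ar lab"
    and "wf ar t0" and "ground t0"
    and "strategy select"
  shows "invariant R ar lab t0 (t0, Bud (s0 (lhss R)) [], {}) \<and>
         (\<forall>t ct reds. invariant R ar lab t0 (t, ct, reds) \<and> (buds ct \<noteq> {} \<or> reds \<noteq> {}) \<longrightarrow>
            invariant R ar lab t0 (loop_body R ar lab select (t, ct, reds)))"
proof -
  interpret left_linear_set_automaton R ar lab
    using assms(2-4) by unfold_locales (auto simp: trs_def lhss_def)
  show ?thesis
    using invariant_init loop_body_invariant assms(5-7) by blast
qed

end
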